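(* For $n\ge0$ let $E^*_{2n+1}(q)=\sum_{\sigma\in\mathfrak{A}_{2n+1}}q^{(31\text{-}2)\sigma+2(2\text{-}13)\sigma}$ and $E^*_{2n}(q)=\sum_{\sigma\in\mathfrak{A}_{2n}}q^{(31\text{-}2)\sigma+2(2\text{-}31)\sigma}$ (with $E^*_0(q)=1$). Then $$\sum_{n=0}^{\infty} E_{2n+1}^*(q) t^{2n+1} = \cfrac{t}{1-\cfrac{q[1]_q[2]_qt^2}{1-\cfrac{q^3[2]_q[3]_qt^2}{1-\cfrac{q^5[3]_q[4]_qt^2}{\ddots}}}}, \qquad \sum_{n=0}^{\infty} E_{2n}^*(q) t^{2n} = \cfrac{1}{1-\cfrac{q^0[1]_q^2t^2}{1-\cfrac{q^2[2]_q^2t^2}{1-\cfrac{q^4[3]_q^2t^2}{\ddots}}}},$$ where in the $k$-th level the coefficient is $q^{2k-1}[k]_q[k+1]_q$ (resp. $q^{2k-2}[k]_q^2$).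
   Context: $[n]_q=1+q+\cdots+q^{n-1}$. $\mathfrak{A}_m$ is the set of falling alternating permutations $\sigma=\sigma_1\cdots\sigma_m$ of $\{1,\dots,m\}$, i.e. $\sigma_1>\sigma_2<\sigma_3>\cdots$. For such $\sigma$: $(31\text{-}2)\sigma=\#\{(i,j): i+1<j,\ \sigma_i>\sigma_j>\sigma_{i+1}\}$; $(2\text{-}31)\sigma=\#\{(i,j): j<i-1,\ \sigma_{i-1}>\sigma_j>\sigma_i\}$; $(2\text{-}13)\sigma=\#\{(i,j): j<i-1,\ \sigma_{i-1}<\sigma_j<\sigma_i\}$. *)

theory Defs
  imports "HOL-Computational_Algebra.Formal_Power_Series"
begin

definition qint :: "nat \<Rightarrow> 'a::field \<Rightarrow> 'a" where
  "qint n q = (\<Sum>i<n. q ^ i)"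

text \<open>Falling alternating permutations of {1..m}, as lists s = [s_1,...,s_m]
  (0-based list positions): s_1 > s_2 < s_3 > ...\<close>
definition falling_alt :: "nat \<Rightarrow> nat list set" where
  "falling_alt m = {s. distinct s \<and> set s = {1..m} \<and>
     (\<forall>i. i + 1 < m \<longrightarrow> (if even i then s ! i > s ! (i + 1) else s ! i < s ! (i + 1)))}"

definition pat_31_2 :: "nat list \<Rightarrow> nat" where
  "pat_31_2 s = card {(i, j). i < length s \<and> j < length s \<and> i + 1 < j \<and>
      s ! i > s ! j \<and> s ! j > s ! (i + 1)}"

definition pat_2_31 :: "nat list \<Rightarrow> nat" where
  "pat_2_31 s = card {(i, j). 1 \<le> i \<and> i < length s \<and> j + 1 < i \<and>
      s ! (i - 1) > s ! j \<and> s ! j > s ! i}"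

definition pat_2_13 :: "nat list \<Rightarrow> nat" where
  "pat_2_13 s = card {(i, j). 1 \<le> i \<and> i < length s \<and> j + 1 < i \<and>
      s ! (i - 1) < s ! j \<and> s ! j < s ! i}"

definition Estar :: "nat \<Rightarrow> 'a::field \<Rightarrow> 'a" where
  "Estar m q = (if odd m
     then (\<Sum>s\<in>falling_alt m. q ^ (pat_31_2 s + 2 * pat_2_13 s))
     else (\<Sum>s\<in>falling_alt m. q ^ (pat_31_2 s + 2 * pat_2_31 s)))"

text \<open>The infinite continued fraction is the limit (in the fps metric) as h \<rightarrow> \<infinity>.\<close>
fun cfrac :: "(nat \<Rightarrow> 'a::field) \<Rightarrow> nat \<Rightarrow> nat \<Rightarrow> 'a fps" where
  "cfrac c k 0 = 1"
| "cfrac c k (Suc h) = inverse (1 - fps_const (c k) * fps_X ^ 2 * cfrac c (Suc k) h)"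

end

theory Submission
  imports Defs "HOL-Library.Extended_Nat"
begin

text \<open>By Flajolet's theory of continued fractions, if \<open>c (k + 1) = u k * d (k + 1)\<close> the truncations
  of the continued fraction converge to the generating function of weighted paths from height \<open>0\<close>
  back to \<open>0\<close>, a step from height \<open>h\<close> down to \<open>h - 1\<close> weighing \<open>u (h - 1)\<close> and a step up to
  \<open>h + 1\<close> weighing \<open>d (h + 1)\<close>.

  Such paths appear when a falling alternating permutation, framed by sentinels, is built by
  inserting \<open>1, 2, \<dots>\<close> in increasing order into a word in which every maximal factor of letters
  still to come is a hole \<open>\<infinity>\<close>. The new largest letter either fills a hole (it becomes a peak) or
  splits a hole into \<open>\<infinity> (v + 1) \<infinity>\<close> (it becomes a valley). Put into a hole with \<open>g\<close> holes to its
  left and \<open>g'\<close> to its right, it creates \<open>g\<close> occurrences of (31-2) and \<open>g'\<close> of (2-13), resp.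
  (2-31); summing over the \<open>N\<close> possible holes gives the weight
  \<open>q\<^sup>N\<^sup>-\<^sup>1 [N]\<^sub>q\<close>. So the number of holes performs a weighted path with
  \<open>u i = q\<^sup>i [i + 1]\<^sub>q\<close> and \<open>d i = q\<^sup>i [i + 1]\<^sub>q\<close> for odd length, resp. \<open>d i = q\<^sup>i\<^sup>-\<^sup>1 [i]\<^sub>q\<close> for
  even length, where the final sentinel \<open>\<infinity>\<close> is a hole that may be split but not filled.\<close>

section \<open>Continued fractions and weighted paths\<close>

fun path_weight :: "(nat \<Rightarrow> 'a::field) \<Rightarrow> (nat \<Rightarrow> 'a) \<Rightarrow> nat \<Rightarrow> nat \<Rightarrow> 'a" where
  "path_weight u d 0 h = (if h = 0 then 1 else 0)"
| "path_weight u d (Suc n) h =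
     (if h = 0 then 0 else u (h - 1) * path_weight u d n (h - 1))
     + d (Suc h) * path_weight u d n (Suc h)"

fun path_weight_bounded :: "(nat \<Rightarrow> 'a::field) \<Rightarrow> (nat \<Rightarrow> 'a) \<Rightarrow> nat \<Rightarrow> nat \<Rightarrow> nat \<Rightarrow> 'a" where
  "path_weight_bounded u d H 0 h = (if h = 0 then 1 else 0)"
| "path_weight_bounded u d H (Suc n) h =
     (if h = 0 then 0 else u (h - 1) * path_weight_bounded u d H n (h - 1))
     + (if Suc h \<le> H then d (Suc h) * path_weight_bounded u d H n (Suc h) else 0)"

lemma path_weight_bounded_eq: "h + n \<le> H \<Longrightarrow> path_weight_bounded u d H n h = path_weight u d n h"
  by (induction n arbitrary: h) auto

lemma path_weight_odd: "odd (n + h) \<Longrightarrow> path_weight u d n h = 0"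
  by (induction n arbitrary: h) (auto simp: odd_pos)

lemma nth_0_cfrac: "fps_nth (cfrac c k h) 0 = 1"
  by (induction h arbitrary: k) (auto simp: fps_inverse_def)

lemma cfrac_Suc_fixpoint:
  "cfrac c k (Suc h) = 1 + fps_const (c k) * fps_X ^ 2 * cfrac c (Suc k) h * cfrac c k (Suc h)"
proof -
  have "cfrac c k (Suc h) * (1 - fps_const (c k) * fps_X ^ 2 * cfrac c (Suc k) h) = 1"
    by (simp add: inverse_mult_eq_1)
  then show ?thesis by (simp add: algebra_simps)
qed

lemma fixpoint_mult_expand:
  fixes F :: "'b::comm_ring_1"
  assumes "F = 1 + a * b * x ^ 2 * G * F"
  shows "A * F = A + b * (x * (a * (x * (A * F * G))))"
proof -
  have "A * F = A * (1 + a * b * x ^ 2 * G * F)" using assms by simp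
  also have "\<dots> = A + b * (x * (a * (x * (A * F * G))))"
    by (simp add: algebra_simps power2_eq_square)
  finally show ?thesis .
qed

text \<open>\<open>cfrac_path_series c u H h = u 0 \<cdots> u (h - 1) \<cdot> X\<^sup>h \<cdot> \<Prod>k=1..h+1. cfrac c k (H + 1 - k)\<close>\<close>
fun cfrac_path_series :: "(nat \<Rightarrow> 'a) \<Rightarrow> (nat \<Rightarrow> 'a::field) \<Rightarrow> nat \<Rightarrow> nat \<Rightarrow> 'a fps" where
  "cfrac_path_series c u H 0 = cfrac c 1 H"
| "cfrac_path_series c u H (Suc h) =
     fps_const (u h) * (fps_X * (cfrac_path_series c u H h * cfrac c (Suc (Suc h)) (H - Suc h)))"

lemma cfrac_path_series_rec:
  assumes c: "\<And>k. c (Suc k) = u k * d (Suc k)" and "h \<le> H"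
  shows "cfrac_path_series c u H h =
      (if h = 0 then 1 else fps_const (u (h - 1)) * (fps_X * cfrac_path_series c u H (h - 1)))
      + (if h < H then fps_const (d (Suc h)) * (fps_X * cfrac_path_series c u H (Suc h)) else 0)"
proof -
  define A where
    "A = (if h = 0 then 1 else fps_const (u (h - 1)) * (fps_X * cfrac_path_series c u H (h - 1)))"
  define F where "F = cfrac c (Suc h) (H - h)"
  have P: "cfrac_path_series c u H h = A * F"
    by (cases h) (simp_all add: A_def F_def mult.assoc)
  show ?thesis
  proof (cases "h < H")
    case True
    define G where "G = cfrac c (Suc (Suc h)) (H - Suc h)"
    have "H - h = Suc (H - Suc h)" using True by simp
    then have "F = 1 + fps_const (u h) * fps_const (d (Suc h)) * fps_X ^ 2 * G * F"
      using cfrac_Suc_fixpoint[of c "Suc h" "H - Suc h"] c[of h]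
      by (simp add: F_def G_def fps_const_mult[symmetric] del: fps_const_mult)
    then have "A * F =
        A + fps_const (d (Suc h)) * (fps_X * (fps_const (u h) * (fps_X * (A * F * G))))"
      by (rule fixpoint_mult_expand)
    then show ?thesis using True P by (simp add: A_def G_def)
  next
    case False
    then show ?thesis using P \<open>h \<le> H\<close> by (simp add: A_def F_def)
  qed
qed

lemma nth_cfrac_path_series:
  assumes c: "\<And>k. c (Suc k) = u k * d (Suc k)"
  shows "h \<le> H \<Longrightarrow> fps_nth (cfrac_path_series c u H h) n = path_weight_bounded u d H n h"
proof (induction n arbitrary: h)
  case 0
  then show ?case by (cases h) (auto simp: nth_0_cfrac)
next
  case (Suc n)
  have "fps_nth (cfrac_path_series c u H h) (Suc n) =
      (if h = 0 then 0 else u (h - 1) * fps_nth (cfrac_path_series c u H (h - 1)) n)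
      + (if h < H then d (Suc h) * fps_nth (cfrac_path_series c u H (Suc h)) n else 0)"
    by (subst cfrac_path_series_rec[where c = c and u = u and d = d, OF c Suc.prems])
       (simp_all del: cfrac_path_series.simps add: fps_X_mult_nth)
  then show ?case using Suc by (auto simp del: cfrac_path_series.simps)
qed

lemma cfrac_tendsto_path_weight:
  assumes c: "\<And>k. c (Suc k) = u k * d (Suc k)"
  shows "(\<lambda>H. cfrac c 1 H) \<longlonglongrightarrow> Abs_fps (\<lambda>n. path_weight u d n 0)"
proof (rule tendsto_fpsI)
  fix n
  have "fps_nth (cfrac c 1 H) n = path_weight u d n 0" if "n \<le> H" for H
  proof -
    have "fps_nth (cfrac c 1 H) n = path_weight_bounded u d H n 0"
      using nth_cfrac_path_series[where c = c and u = u and d = d, OF c, of 0 H n] by simp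
    then show ?thesis using that by (simp add: path_weight_bounded_eq)
  qed
  then show "eventually (\<lambda>H.
      fps_nth (cfrac c 1 H) n = fps_nth (Abs_fps (\<lambda>n. path_weight u d n 0)) n) sequentially"
    unfolding eventually_sequentially by auto
qed

section \<open>Vincular pattern counts\<close>

definition occurrences ::
    "(nat \<Rightarrow> nat \<Rightarrow> bool) \<Rightarrow> ('b \<Rightarrow> 'b \<Rightarrow> 'b \<Rightarrow> bool) \<Rightarrow> 'b list \<Rightarrow> (nat \<times> nat) set" where
  "occurrences Q R z =
     {(a, j). a + 1 < length z \<and> j < length z \<and> Q a j \<and> R (z ! a) (z ! (a + 1)) (z ! j)}"

definition pattern_count ::
    "(nat \<Rightarrow> nat \<Rightarrow> bool) \<Rightarrow> ('b \<Rightarrow> 'b \<Rightarrow> 'b \<Rightarrow> bool) \<Rightarrow> 'b list \<Rightarrow> nat" where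
  "pattern_count Q R z = card (occurrences Q R z)"

definition after_pair :: "nat \<Rightarrow> nat \<Rightarrow> bool" where "after_pair a j = (a + 1 < j)"
definition before_pair :: "nat \<Rightarrow> nat \<Rightarrow> bool" where "before_pair a j = (j < a)"

definition between_desc :: "'b::ord \<Rightarrow> 'b \<Rightarrow> 'b \<Rightarrow> bool" where
  "between_desc a b c = (c < a \<and> b < c)"
definition between_asc :: "'b::ord \<Rightarrow> 'b \<Rightarrow> 'b \<Rightarrow> bool" where
  "between_asc a b c = (a < c \<and> c < b)"

abbreviation occ_31_2 :: "'b::ord list \<Rightarrow> nat" where
  "occ_31_2 \<equiv> pattern_count after_pair between_desc"
abbreviation occ_2_31 :: "'b::ord list \<Rightarrow> nat" where
  "occ_2_31 \<equiv> pattern_count before_pair between_desc"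
abbreviation occ_2_13 :: "'b::ord list \<Rightarrow> nat" where
  "occ_2_13 \<equiv> pattern_count before_pair between_asc"

lemma finite_occurrences: "finite (occurrences Q R z)"
  unfolding occurrences_def by (rule finite_subset[of _ "{..<length z} \<times> {..<length z}"]) auto

lemma occurrences_delete:
  assumes Q: "Q = after_pair \<or> Q = before_pair"
    and len: "length z = Suc (length z')" and dl: "d < length z"
    and nth: "\<And>k. k < length z' \<Longrightarrow> z' ! k = z ! (if k < d then k else Suc k)"
    and avoid: "\<And>a j. a + 1 < length z \<Longrightarrow> j < length z \<Longrightarrow> Q a j \<Longrightarrow>
      R (z ! a) (z ! (a + 1)) (z ! j) \<Longrightarrow> a \<noteq> d \<and> Suc a \<noteq> d \<and> j \<noteq> d"
    and gap: "\<And>c. 0 < d \<Longrightarrow> d + 1 < length z \<Longrightarrow> \<not> R (z ! (d - 1)) (z ! (d + 1)) c"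
  shows "occurrences Q R z =
    (\<lambda>(a, j). (if a < d then a else Suc a, if j < d then j else Suc j)) ` occurrences Q R z'"
proof -
  define g where "g k = (if k < d then k else Suc k)" for k
  define f where "f k = (if k < d then k else k - 1)" for k
  have "occurrences Q R z = (\<lambda>(a, j). (g a, g j)) ` occurrences Q R z'"
  proof (intro equalityI subsetI)
    fix p assume "p \<in> occurrences Q R z"
    then obtain a j where pe: "p = (a, j)" and a1: "a + 1 < length z" and jl: "j < length z"
      and q: "Q a j" and r: "R (z ! a) (z ! (a + 1)) (z ! j)" by (auto simp: occurrences_def)
    from avoid[OF a1 jl q r] have nd: "a \<noteq> d" "Suc a \<noteq> d" "j \<noteq> d" by auto
    have gf: "g (f k) = k" if "k \<noteq> d" for k using that by (auto simp: g_def f_def)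
    have fs: "f (a + 1) = f a + 1" using nd by (auto simp: f_def)
    have fl: "f a + 1 < length z'" "f j < length z'" using nd a1 jl len dl by (auto simp: f_def)
    have zz: "z' ! f a = z ! a" "z' ! (f a + 1) = z ! (a + 1)" "z' ! f j = z ! j"
      using nth[of "f a"] nth[of "f a + 1"] nth[of "f j"] fl gf[of a] gf[of "a+1"] gf[of j] nd fs
      by (auto simp: g_def)
    have "Q (f a) (f j)" using q Q nd by (auto simp: f_def after_pair_def before_pair_def)
    then have "(f a, f j) \<in> occurrences Q R z'" using fl zz r by (auto simp: occurrences_def)
    moreover have "p = (g (f a), g (f j))" using pe gf nd by simp
    ultimately show "p \<in> (\<lambda>(a, j). (g a, g j)) ` occurrences Q R z'" by force
  next
    fix p assume "p \<in> (\<lambda>(a, j). (g a, g j)) ` occurrences Q R z'"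
    then obtain a j where pe: "p = (g a, g j)" and a1: "a + 1 < length z'" and jl: "j < length z'"
      and q: "Q a j" and r: "R (z' ! a) (z' ! (a + 1)) (z' ! j)" by (auto simp: occurrences_def)
    have ga: "z' ! a = z ! g a" "z' ! (a + 1) = z ! g (a + 1)" "z' ! j = z ! g j"
      using nth a1 jl by (auto simp: g_def)
    have "g (a + 1) = g a + 1"
    proof (rule ccontr)
      assume "g (a + 1) \<noteq> g a + 1"
      then have ad: "a + 1 = d" by (auto simp: g_def split: if_splits)
      then have "g a = d - 1" "g (a + 1) = d + 1" by (auto simp: g_def)
      with r ga gap[of "z ! g j"] a1 len ad show False by auto
    qed
    moreover have "Q (g a) (g j)" using q Q by (auto simp: g_def after_pair_def before_pair_def)
    ultimately show "p \<in> occurrences Q R z"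
      using pe a1 jl len r ga by (auto simp: occurrences_def g_def)
  qed
  then show ?thesis by (simp add: g_def)
qed

lemma pattern_count_delete:
  assumes "Q = after_pair \<or> Q = before_pair"
    and "length z = Suc (length z')" and "d < length z"
    and "\<And>k. k < length z' \<Longrightarrow> z' ! k = z ! (if k < d then k else Suc k)"
    and "\<And>a j. a + 1 < length z \<Longrightarrow> j < length z \<Longrightarrow> Q a j \<Longrightarrow>
      R (z ! a) (z ! (a + 1)) (z ! j) \<Longrightarrow> a \<noteq> d \<and> Suc a \<noteq> d \<and> j \<noteq> d"
    and "\<And>c. 0 < d \<Longrightarrow> d + 1 < length z \<Longrightarrow> \<not> R (z ! (d - 1)) (z ! (d + 1)) c"
  shows "pattern_count Q R z' = pattern_count Q R z"
proof -
  have "occurrences Q R z =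
      (\<lambda>(a, j). (if a < d then a else Suc a, if j < d then j else Suc j)) ` occurrences Q R z'"
    by (rule occurrences_delete[where R = R, OF assms])
  moreover have "inj_on (\<lambda>(a, j). (if a < d then a else Suc a, if j < d then j else Suc j))
      (occurrences Q R z')"
    by (auto simp: inj_on_def split: if_splits)
  ultimately show ?thesis by (simp add: pattern_count_def card_image)
qed

lemma occurrences_replace:
  assumes len: "length z' = length z" and p: "p < length z"
    and same: "\<And>a j. a + 1 < length z \<Longrightarrow> j < length z \<Longrightarrow> Q a j \<Longrightarrow> j \<noteq> p \<Longrightarrow>
               R (z ! a) (z ! (a + 1)) (z ! j) = R (z' ! a) (z' ! (a + 1)) (z' ! j)"
    and none: "\<And>a. a + 1 < length z \<Longrightarrow> Q a p \<Longrightarrow> \<not> R (z' ! a) (z' ! (a + 1)) (z' ! p)"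
  shows "occurrences Q R z = occurrences Q R z' \<union>
    (\<lambda>a. (a, p)) ` {a. a + 1 < length z \<and> Q a p \<and> R (z ! a) (z ! (a + 1)) (z ! p)}"
proof (intro equalityI subsetI)
  fix q assume "q \<in> occurrences Q R z"
  then obtain a j where q: "q = (a, j)" "a + 1 < length z" "j < length z" "Q a j"
      "R (z ! a) (z ! (a + 1)) (z ! j)"
    by (auto simp: occurrences_def)
  then show "q \<in> occurrences Q R z' \<union>
      (\<lambda>a. (a, p)) ` {a. a + 1 < length z \<and> Q a p \<and> R (z ! a) (z ! (a + 1)) (z ! p)}"
    using same[of a j] len by (cases "j = p") (auto simp: occurrences_def)
next
  fix q assume "q \<in> occurrences Q R z' \<union>
      (\<lambda>a. (a, p)) ` {a. a + 1 < length z \<and> Q a p \<and> R (z ! a) (z ! (a + 1)) (z ! p)}"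
  then show "q \<in> occurrences Q R z"
  proof
    assume "q \<in> occurrences Q R z'"
    then obtain a j where q: "q = (a, j)" "a + 1 < length z" "j < length z" "Q a j"
        "R (z' ! a) (z' ! (a + 1)) (z' ! j)"
      using len by (auto simp: occurrences_def)
    have "j \<noteq> p" using none[of a] q by auto
    then show "q \<in> occurrences Q R z" using q same[of a j] by (auto simp: occurrences_def)
  qed (use p in \<open>auto simp: occurrences_def\<close>)
qed

lemma pattern_count_replace:
  assumes "length z' = length z" and "p < length z"
    and "\<And>a j. a + 1 < length z \<Longrightarrow> j < length z \<Longrightarrow> Q a j \<Longrightarrow> j \<noteq> p \<Longrightarrow>
               R (z ! a) (z ! (a + 1)) (z ! j) = R (z' ! a) (z' ! (a + 1)) (z' ! j)"
    and none: "\<And>a. a + 1 < length z \<Longrightarrow> Q a p \<Longrightarrow> \<not> R (z' ! a) (z' ! (a + 1)) (z' ! p)"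
  shows "pattern_count Q R z =
    pattern_count Q R z' + card {a. a + 1 < length z \<and> Q a p \<and> R (z ! a) (z ! (a + 1)) (z ! p)}"
proof -
  define A where "A = {a. a + 1 < length z \<and> Q a p \<and> R (z ! a) (z ! (a + 1)) (z ! p)}"
  have "occurrences Q R z' \<inter> (\<lambda>a. (a, p)) ` A = {}"
    using none assms(1) by (auto simp: occurrences_def A_def)
  moreover have "finite A" unfolding A_def by (rule finite_subset[of _ "{..<length z}"]) auto
  ultimately have "card (occurrences Q R z' \<union> (\<lambda>a. (a, p)) ` A) = pattern_count Q R z' + card A"
    by (simp add: pattern_count_def card_Un_disjoint finite_occurrences card_image inj_on_def)
  moreover have "occurrences Q R z = occurrences Q R z' \<union> (\<lambda>a. (a, p)) ` A"
    unfolding A_def by (rule occurrences_replace[OF assms])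
  ultimately show ?thesis by (simp add: pattern_count_def A_def)
qed

definition count_adjacent :: "('b \<Rightarrow> 'b \<Rightarrow> bool) \<Rightarrow> 'b list \<Rightarrow> nat" where
  "count_adjacent P l = card {i. i + 1 < length l \<and> P (l ! i) (l ! (i + 1))}"

lemma count_adjacent_Nil [simp]: "count_adjacent P [] = 0"
  by (simp add: count_adjacent_def)

lemma count_adjacent_Cons:
  "count_adjacent P (a # l) = (if l \<noteq> [] \<and> P a (hd l) then 1 else 0) + count_adjacent P l"
proof -
  define I where "I = {i. i + 1 < length l \<and> P (l ! i) (l ! (i + 1))}"
  have set_eq: "{i. i + 1 < length (a # l) \<and> P ((a # l) ! i) ((a # l) ! (i + 1))}
      = (if l \<noteq> [] \<and> P a (hd l) then {0} else {}) \<union> Suc ` I"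
  proof (intro equalityI subsetI)
    fix i assume i: "i \<in> {i. i + 1 < length (a # l) \<and> P ((a # l) ! i) ((a # l) ! (i + 1))}"
    show "i \<in> (if l \<noteq> [] \<and> P a (hd l) then {0} else {}) \<union> Suc ` I"
      using i by (cases i; cases l) (auto simp: I_def)
  qed (cases l; auto split: if_splits simp: hd_conv_nth I_def)
  moreover have "finite I" unfolding I_def by (rule finite_subset[of _ "{..<length l}"]) auto
  then show ?thesis unfolding count_adjacent_def I_def[symmetric] set_eq
    by (subst card_Un_disjoint) (auto simp: card_image)
qed

definition hole_then_letter :: "enat \<Rightarrow> enat \<Rightarrow> bool" where
  "hole_then_letter a b = (a = \<infinity> \<and> b \<noteq> \<infinity>)"
definition letter_then_hole :: "enat \<Rightarrow> enat \<Rightarrow> bool" where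
  "letter_then_hole a b = (a \<noteq> \<infinity> \<and> b = \<infinity>)"

lemma between_desc_fill:
  assumes "(c::enat) = \<infinity> \<or> c < m"
  shows "between_desc m b c = between_desc \<infinity> b c" "between_desc a m c = between_desc a \<infinity> c"
  using assms by (cases c; cases m; auto simp: between_desc_def)+

lemma between_asc_fill:
  assumes "(c::enat) = \<infinity> \<or> c < m"
  shows "between_asc m b c = between_asc \<infinity> b c" "between_asc a m c = between_asc a \<infinity> c"
  using assms by (cases c; cases m; auto simp: between_asc_def)+

lemma pattern_count_fill_hole:
  fixes m :: enat
  assumes m: "m \<noteq> \<infinity>" and less: "\<forall>e \<in> set x \<union> set y. e = \<infinity> \<or> e < m"
    and fill_fst: "\<And>b c. c = \<infinity> \<or> c < m \<Longrightarrow> R m b c = R \<infinity> b c"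
    and fill_snd: "\<And>a c. c = \<infinity> \<or> c < m \<Longrightarrow> R a m c = R a \<infinity> c"
    and hole: "\<And>a b. \<not> R a b \<infinity>"
  shows "pattern_count Q R (x @ m # y) = pattern_count Q R (x @ \<infinity> # y) +
    card {a. a + 1 < length (x @ m # y) \<and> Q a (length x) \<and>
      R ((x @ m # y) ! a) ((x @ m # y) ! (a + 1)) m}"
proof -
  let ?z = "x @ m # y" and ?z' = "x @ \<infinity> # y" and ?p = "length x"
  have rn: "?z' ! k = ?z ! k \<and> (?z ! k = \<infinity> \<or> ?z ! k < m)" if "k < length ?z" "k \<noteq> ?p" for k
    using that less by (auto simp: nth_append nth_Cons' split: if_splits)
  have "pattern_count Q R ?z =
      pattern_count Q R ?z' +
      card {a. a + 1 < length ?z \<and> Q a ?p \<and> R (?z ! a) (?z ! (a + 1)) (?z ! ?p)}"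
  proof (rule pattern_count_replace)
    fix a j assume a: "a + 1 < length ?z" and j: "j < length ?z" "Q a j" "j \<noteq> ?p"
    have vj: "?z' ! j = ?z ! j" "?z ! j = \<infinity> \<or> ?z ! j < m" using rn[of j] j by auto
    show "R (?z ! a) (?z ! (a + 1)) (?z ! j) = R (?z' ! a) (?z' ! (a + 1)) (?z' ! j)"
    proof (cases "a = ?p")
      case True
      then have "?z ! a = m" "?z' ! a = \<infinity>" "?z' ! (a+1) = ?z ! (a+1)" using rn[of "a+1"] a by auto
      then show ?thesis using vj fill_fst by simp
    next
      case False
      then have e1: "?z' ! a = ?z ! a" using rn[of a] a by auto
      show ?thesis
      proof (cases "a + 1 = ?p")
        case True
        then have "?z ! (a+1) = m" "?z' ! (a+1) = \<infinity>" by auto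
        then show ?thesis using vj fill_snd e1 by simp
      next
        case False
        then have "?z' ! (a+1) = ?z ! (a+1)" using rn[of "a+1"] a by auto
        then show ?thesis using vj e1 by simp
      qed
    qed
  next
    fix a show "\<not> R (?z' ! a) (?z' ! (a + 1)) (?z' ! ?p)" using hole by simp
  qed (use rn in auto)
  then show ?thesis by simp
qed

lemma pattern_count_fill_31_2:
  fixes m :: enat
  assumes m: "m \<noteq> \<infinity>" and less: "\<forall>e \<in> set x \<union> set y. e = \<infinity> \<or> e < m"
  shows "occ_31_2 (x @ m # y) = occ_31_2 (x @ \<infinity> # y) + count_adjacent hole_then_letter x"
proof -
  have "occ_31_2 (x @ m # y) = occ_31_2 (x @ \<infinity> # y) + card {a. a + 1 < length (x @ m # y) \<and>
      after_pair a (length x) \<and> between_desc ((x @ m # y) ! a) ((x @ m # y) ! (a + 1)) m}"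
    by (rule pattern_count_fill_hole[where R = between_desc, OF m less between_desc_fill(1,2)])
       (auto simp: between_desc_def)
  moreover have "{a. a + 1 < length (x @ m # y) \<and> after_pair a (length x) \<and>
      between_desc ((x @ m # y) ! a) ((x @ m # y) ! (a + 1)) m}
      = {i. i + 1 < length x \<and> hole_then_letter (x ! i) (x ! (i + 1))}"
  proof -
    have "between_desc (x ! a) (x ! (a + 1)) m = hole_then_letter (x ! a) (x ! (a + 1))"
      if "a + 1 < length x" for a
    proof -
      have "x ! a = \<infinity> \<or> x ! a < m" "x ! (a+1) = \<infinity> \<or> x ! (a+1) < m" using that less by auto
      then show ?thesis
        using m by (auto simp: between_desc_def hole_then_letter_def elim: less_enatE)
    qed
    then show ?thesis by (auto simp: after_pair_def nth_append)
  qed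
  ultimately show ?thesis by (simp add: count_adjacent_def)
qed

lemma pattern_count_fill_before:
  fixes m :: enat
  assumes m: "m \<noteq> \<infinity>" and less: "\<forall>e \<in> set x \<union> set y. e = \<infinity> \<or> e < m"
    and fill_fst: "\<And>b c. c = \<infinity> \<or> c < m \<Longrightarrow> R m b c = R \<infinity> b c"
    and fill_snd: "\<And>a c. c = \<infinity> \<or> c < m \<Longrightarrow> R a m c = R a \<infinity> c"
    and hole: "\<And>a b. \<not> R a b \<infinity>"
    and P: "\<And>a b. a = \<infinity> \<or> a < m \<Longrightarrow> b = \<infinity> \<or> b < m \<Longrightarrow> R a b m = P a b"
  shows "pattern_count before_pair R (x @ m # y) =
    pattern_count before_pair R (x @ \<infinity> # y) + count_adjacent P y"
proof -
  define I where "I = {i. i + 1 < length y \<and> P (y ! i) (y ! (i + 1))}"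
  have RP: "R (y ! t) (y ! (t + 1)) m = P (y ! t) (y ! (t + 1))" if "t + 1 < length y" for t
    using that less P by auto
  have "{a. a + 1 < length (x @ m # y) \<and> before_pair a (length x) \<and>
      R ((x @ m # y) ! a) ((x @ m # y) ! (a + 1)) m} = (\<lambda>t. Suc (length x) + t) ` I"
  proof (intro equalityI subsetI)
    fix a assume "a \<in> {a. a + 1 < length (x @ m # y) \<and> before_pair a (length x) \<and>
      R ((x @ m # y) ! a) ((x @ m # y) ! (a + 1)) m}"
    then have a1: "a + 1 < length (x @ m # y)" "length x < a"
        "R ((x @ m # y) ! a) ((x @ m # y) ! (a + 1)) m"
      by (auto simp: before_pair_def)
    define t where "t = a - Suc (length x)"
    have at: "a = Suc (length x) + t" using a1 by (simp add: t_def)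
    then have "(x @ m # y) ! a = y ! t" "(x @ m # y) ! (a + 1) = y ! (t + 1)"
      by (auto simp: nth_append)
    then show "a \<in> (\<lambda>t. Suc (length x) + t) ` I" using a1 RP at by (auto simp: I_def)
  next
    fix a assume "a \<in> (\<lambda>t. Suc (length x) + t) ` I"
    then obtain t where t: "a = Suc (length x) + t" "t + 1 < length y" "P (y ! t) (y ! (t + 1))"
      by (auto simp: I_def)
    then have "(x @ m # y) ! a = y ! t" "(x @ m # y) ! (a + 1) = y ! (t + 1)"
      by (auto simp: nth_append)
    then show "a \<in> {a. a + 1 < length (x @ m # y) \<and> before_pair a (length x) \<and>
      R ((x @ m # y) ! a) ((x @ m # y) ! (a + 1)) m}"
      using t RP by (auto simp: before_pair_def)
  qed
  moreover have "card ((\<lambda>t. Suc (length x) + t) ` I) = count_adjacent P y"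
    by (subst card_image) (auto simp: I_def count_adjacent_def)
  ultimately show ?thesis
    using pattern_count_fill_hole[where R = R and Q = before_pair, OF m less fill_fst fill_snd hole]
    by simp
qed

lemma pattern_count_fill_2_13:
  fixes m :: enat
  assumes m: "m \<noteq> \<infinity>" and less: "\<forall>e \<in> set x \<union> set y. e = \<infinity> \<or> e < m"
  shows "occ_2_13 (x @ m # y) = occ_2_13 (x @ \<infinity> # y) + count_adjacent letter_then_hole y"
  by (rule pattern_count_fill_before[where R = between_asc, OF m less between_asc_fill(1,2)])
     (use m in \<open>auto simp: between_asc_def letter_then_hole_def elim: less_enatE\<close>)

lemma pattern_count_fill_2_31:
  fixes m :: enat
  assumes m: "m \<noteq> \<infinity>" and less: "\<forall>e \<in> set x \<union> set y. e = \<infinity> \<or> e < m"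
  shows "occ_2_31 (x @ m # y) = occ_2_31 (x @ \<infinity> # y) + count_adjacent hole_then_letter y"
  by (rule pattern_count_fill_before[where R = between_desc, OF m less between_desc_fill(1,2)])
     (use m in \<open>auto simp: between_desc_def hole_then_letter_def elim: less_enatE\<close>)

lemma pattern_count_double_hole_desc:
  fixes x y :: "enat list"
  assumes "Q = after_pair \<or> Q = before_pair"
  shows "pattern_count Q between_desc (x @ \<infinity> # y) = pattern_count Q between_desc (x @ \<infinity> # \<infinity> # y)"
  by (rule pattern_count_delete[where d = "length x", OF assms])
     (auto simp: between_desc_def nth_append nth_Cons' split: if_splits)

lemma occ_2_13_double_hole:
  fixes x y :: "enat list"
  shows "occ_2_13 (x @ \<infinity> # y) = occ_2_13 (x @ \<infinity> # \<infinity> # y)"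
  by (rule pattern_count_delete[where d = "Suc (length x)"])
     (auto simp: between_asc_def nth_append nth_Cons' split: if_splits)

lemma pattern_count_Cons_0:
  fixes w :: "enat list"
  assumes "Q = after_pair \<or> Q = before_pair"
    and "\<And>b c j. Q 0 j \<Longrightarrow> \<not> R 0 b c" and "\<And>a b. \<not> R a b 0"
  shows "pattern_count Q R (0 # w) = pattern_count Q R w"
proof -
  have "pattern_count Q R w = pattern_count Q R (0 # w)"
  proof (rule pattern_count_delete[where d = 0, OF assms(1)])
    fix a j assume "a + 1 < length (0 # w)" "j < length (0 # w)" "Q a j"
      "R ((0 # w) ! a) ((0 # w) ! (a + 1)) ((0 # w) ! j)"
    then show "a \<noteq> 0 \<and> Suc a \<noteq> 0 \<and> j \<noteq> 0" using assms(2,3) by (cases a; cases j) auto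
  qed auto
  then show ?thesis by simp
qed

lemma pattern_count_snoc:
  fixes w :: "enat list"
  assumes "Q = after_pair \<or> Q = before_pair"
    and "\<And>a j. a + 1 < length (w @ [e]) \<Longrightarrow> j < length (w @ [e]) \<Longrightarrow> Q a j \<Longrightarrow>
       R ((w @ [e]) ! a) ((w @ [e]) ! (a + 1)) ((w @ [e]) ! j) \<Longrightarrow> Suc a \<noteq> length w \<and> j \<noteq> length w"
  shows "pattern_count Q R (w @ [e]) = pattern_count Q R w"
proof -
  have "pattern_count Q R w = pattern_count Q R (w @ [e])"
  proof (rule pattern_count_delete[where d = "length w", OF assms(1)])
    fix a j assume "a + 1 < length (w @ [e])" "j < length (w @ [e])" "Q a j"
      "R ((w @ [e]) ! a) ((w @ [e]) ! (a + 1)) ((w @ [e]) ! j)"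
    then show "a \<noteq> length w \<and> Suc a \<noteq> length w \<and> j \<noteq> length w" using assms(2) by auto
  qed (auto simp: nth_append)
  then show ?thesis by simp
qed

lemma pattern_count_map_enat:
  "pattern_count Q between_desc (map enat s) = pattern_count Q between_desc s"
  "pattern_count Q between_asc (map enat s) = pattern_count Q between_asc s"
  unfolding pattern_count_def occurrences_def between_desc_def between_asc_def
  by (auto intro!: arg_cong[where f = card])

lemma pat_31_2_eq_occ: "pat_31_2 s = occ_31_2 s"
  unfolding pat_31_2_def pattern_count_def occurrences_def after_pair_def between_desc_def
  by (rule arg_cong[where f = card]) auto

lemma card_before_pair_shift:
  "card {(i, j). 1 \<le> i \<and> i < length s \<and> j + 1 < i \<and> R (s ! (i - 1)) (s ! i) (s ! j)}
   = pattern_count before_pair R s"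
proof -
  have "{(i, j). 1 \<le> i \<and> i < length s \<and> j + 1 < i \<and> R (s ! (i - 1)) (s ! i) (s ! j)}
     = (\<lambda>(a, j). (Suc a, j)) ` occurrences before_pair R s"
  proof (intro equalityI subsetI)
    fix p assume "p \<in> {(i, j). 1 \<le> i \<and> i < length s \<and> j + 1 < i \<and> R (s ! (i - 1)) (s ! i) (s ! j)}"
    then obtain i j where p: "p = (i, j)" "1 \<le> i" "i < length s" "j + 1 < i"
        "R (s ! (i - 1)) (s ! i) (s ! j)"
      by auto
    then have "p = (Suc (i - 1), j)" "(i - 1, j) \<in> occurrences before_pair R s"
      by (auto simp: occurrences_def before_pair_def)
    then show "p \<in> (\<lambda>(a, j). (Suc a, j)) ` occurrences before_pair R s" by force
  qed (auto simp: occurrences_def before_pair_def)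
  moreover have "inj_on (\<lambda>(a, j). (Suc a, j)) (occurrences before_pair R s)"
    by (auto simp: inj_on_def)
  ultimately show ?thesis unfolding pattern_count_def by (simp only: card_image)
qed

lemma pat_2_13_eq_occ: "pat_2_13 s = occ_2_13 s"
  unfolding pat_2_13_def card_before_pair_shift[symmetric] between_asc_def by simp

lemma pat_2_31_eq_occ: "pat_2_31 s = occ_2_31 s"
  unfolding pat_2_31_def card_before_pair_shift[symmetric] between_desc_def by simp

lemma occ_wrap_0:
  "occ_31_2 (0 # map enat s @ [0]) = pat_31_2 s"
  "occ_2_13 (0 # map enat s @ [0]) = pat_2_13 s"
proof -
  have "occ_31_2 (0 # map enat s @ [0]) = occ_31_2 (map enat s)"
    by (subst pattern_count_Cons_0, simp_all add: between_desc_def after_pair_def,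
        subst pattern_count_snoc, auto simp: between_desc_def after_pair_def nth_append)
  moreover have "occ_2_13 (0 # map enat s @ [0]) = occ_2_13 (map enat s)"
    by (subst pattern_count_Cons_0, simp_all add: between_asc_def before_pair_def,
        subst pattern_count_snoc, auto simp: between_asc_def before_pair_def nth_append)
  ultimately show "occ_31_2 (0 # map enat s @ [0]) = pat_31_2 s"
    "occ_2_13 (0 # map enat s @ [0]) = pat_2_13 s"
    by (simp_all add: pat_31_2_eq_occ pat_2_13_eq_occ pattern_count_map_enat)
qed

lemma occ_wrap_inf:
  "occ_31_2 (0 # map enat s @ [\<infinity>]) = pat_31_2 s"
  "occ_2_31 (0 # map enat s @ [\<infinity>]) = pat_2_31 s"
proof -
  have "occ_31_2 (0 # map enat s @ [\<infinity>]) = occ_31_2 (map enat s)"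
    by (subst pattern_count_Cons_0, simp_all add: between_desc_def after_pair_def,
        subst pattern_count_snoc, auto simp: between_desc_def after_pair_def nth_append)
  moreover have "occ_2_31 (0 # map enat s @ [\<infinity>]) = occ_2_31 (map enat s)"
    by (subst pattern_count_Cons_0, simp_all add: between_desc_def before_pair_def,
        subst pattern_count_snoc, auto simp: between_desc_def before_pair_def nth_append)
  ultimately show "occ_31_2 (0 # map enat s @ [\<infinity>]) = pat_31_2 s"
    "occ_2_31 (0 # map enat s @ [\<infinity>]) = pat_2_31 s"
    by (simp_all add: pat_31_2_eq_occ pat_2_31_eq_occ pattern_count_map_enat)
qed

section \<open>Alternating words with holes\<close>

fun alternating :: "bool \<Rightarrow> enat list \<Rightarrow> bool" where
  "alternating up (a # b # r) = ((if up then a < b else b < a) \<and> alternating (\<not> up) (b # r))"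
| "alternating up _ = True"

lemma alternating_append:
  "alternating up (xs @ a # ys) \<longleftrightarrow>
    alternating up (xs @ [a]) \<and> alternating (up = even (length xs)) (a # ys)"
proof (induction xs arbitrary: up)
  case Nil
  then show ?case by (cases ys) auto
next
  case (Cons c xs)
  show ?case
  proof (cases xs)
    case Nil
    then show ?thesis by (cases ys) auto
  next
    case (Cons d xs')
    have "alternating up (c # xs @ a # ys) \<longleftrightarrow>
        (if up then c < d else d < c) \<and> alternating (\<not> up) (xs @ a # ys)"
      using Cons by simp
    also have "\<dots> \<longleftrightarrow> (if up then c < d else d < c) \<and> alternating (\<not> up) (xs @ [a]) \<and>
        alternating ((\<not> up) = even (length xs)) (a # ys)"
      using Cons.IH by simp
    also have "\<dots> \<longleftrightarrow>
        alternating up (c # xs @ [a]) \<and> alternating (up = even (length (c # xs))) (a # ys)"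
      using Cons by auto
    finally show ?thesis by simp
  qed
qed

fun no_adjacent_holes :: "enat list \<Rightarrow> bool" where
  "no_adjacent_holes (a # b # r) = (\<not> (a = \<infinity> \<and> b = \<infinity>) \<and> no_adjacent_holes (b # r))"
| "no_adjacent_holes _ = True"

lemma alternating_no_adjacent_holes: "alternating up l \<Longrightarrow> no_adjacent_holes l"
  by (induction up l rule: alternating.induct) (auto split: if_splits)

lemma no_adjacent_holes_append:
  "no_adjacent_holes (xs @ ys) \<longleftrightarrow> no_adjacent_holes xs \<and> no_adjacent_holes ys \<and>
    \<not> (xs \<noteq> [] \<and> ys \<noteq> [] \<and> last xs = \<infinity> \<and> hd ys = \<infinity>)"
proof (induction xs)
  case (Cons a xs)
  then show ?case by (cases xs; cases ys) auto
qed simp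

lemma no_adjacent_holes_Cons:
  "no_adjacent_holes (a # l) \<longleftrightarrow> no_adjacent_holes l \<and> \<not> (l \<noteq> [] \<and> a = \<infinity> \<and> hd l = \<infinity>)"
  by (cases l) auto

lemma no_adjacent_holes_around:
  assumes "no_adjacent_holes (x @ \<infinity> # y)"
  shows "no_adjacent_holes x" "no_adjacent_holes y" "x \<noteq> [] \<Longrightarrow> last x \<noteq> \<infinity>" "y \<noteq> [] \<Longrightarrow> hd y \<noteq> \<infinity>"
proof -
  have "no_adjacent_holes x \<and> no_adjacent_holes (\<infinity> # y) \<and> \<not> (x \<noteq> [] \<and> last x = \<infinity>)"
    using assms no_adjacent_holes_append[of x "\<infinity> # y"] by simp
  then show "no_adjacent_holes x" "no_adjacent_holes y" "x \<noteq> [] \<Longrightarrow> last x \<noteq> \<infinity>" "y \<noteq> [] \<Longrightarrow> hd y \<noteq> \<infinity>"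
    by (auto simp: no_adjacent_holes_Cons)
qed

abbreviation count_holes :: "enat list \<Rightarrow> nat" where
  "count_holes l \<equiv> count_list l \<infinity>"

lemma count_hole_then_letter:
  "no_adjacent_holes l \<Longrightarrow>
    count_adjacent hole_then_letter l = count_holes l - (if l \<noteq> [] \<and> last l = \<infinity> then 1 else 0)"
proof (induction l)
  case (Cons a l)
  then show ?case using last_in_set[of l] count_list_0_iff[of l \<infinity>]
    by (cases l) (auto simp: count_adjacent_Cons hole_then_letter_def no_adjacent_holes_Cons)
qed simp

lemma count_letter_then_hole:
  "no_adjacent_holes l \<Longrightarrow>
    count_adjacent letter_then_hole l = count_holes l - (if l \<noteq> [] \<and> hd l = \<infinity> then 1 else 0)"
proof (induction l)
  case (Cons a l)
  then show ?case using hd_in_set[of l] count_list_0_iff[of l \<infinity>]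
    by (cases l) (auto simp: count_adjacent_Cons letter_then_hole_def no_adjacent_holes_Cons)
qed simp

lemma splits_Cons:
  "{(x, y). b # l = x @ a # y} =
    (if b = a then {([], l)} else {}) \<union> (\<lambda>(x, y). (b # x, y)) ` {(x, y). l = x @ a # y}"
proof (intro equalityI subsetI)
  fix p assume "p \<in> {(x, y). b # l = x @ a # y}"
  then obtain x y where p: "p = (x, y)" "b # l = x @ a # y" by auto
  show "p \<in> (if b = a then {([], l)} else {}) \<union> (\<lambda>(x, y). (b # x, y)) ` {(x, y). l = x @ a # y}"
  proof (cases x)
    case Nil then show ?thesis using p by auto
  next
    case (Cons c x')
    then have "c = b" "l = x' @ a # y" using p by auto
    then show ?thesis using p Cons by auto
  qed
qed (auto split: if_splits)

lemma finite_splits: "finite {(x, y). l = x @ a # y}"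
  by (induction l) (simp_all add: splits_Cons)

lemma sum_splits:
  fixes f :: "nat \<Rightarrow> nat \<Rightarrow> 'c::comm_monoid_add"
  shows "(\<Sum>(x, y) \<in> {(x, y). l = x @ a # y}. f (count_list x a) (count_list y a))
     = (\<Sum>g < count_list l a. f g (count_list l a - 1 - g))"
proof (induction l arbitrary: f)
  case Nil
  then show ?case by simp
next
  case (Cons b l)
  define S where "S = {(x, y). l = x @ a # y}"
  define \<delta> where "\<delta> = (if b = a then 1 else 0 :: nat)"
  have inj: "inj_on (\<lambda>(x, y). (b # x, y)) S" by (auto simp: inj_on_def)
  have "(\<Sum>(x, y) \<in> {(x, y). b # l = x @ a # y}. f (count_list x a) (count_list y a))
     = (\<Sum>(x, y) \<in> (if b = a then {([], l)} else {}). f (count_list x a) (count_list y a))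
       + (\<Sum>(x, y) \<in> (\<lambda>(x, y). (b # x, y)) ` S. f (count_list x a) (count_list y a))"
    unfolding splits_Cons S_def[symmetric]
    by (rule sum.union_disjoint) (auto simp: S_def intro: finite_imageI finite_splits)
  also have "(\<Sum>(x, y) \<in> (\<lambda>(x, y). (b # x, y)) ` S. f (count_list x a) (count_list y a))
     = (\<Sum>(x, y) \<in> S. f (count_list x a + \<delta>) (count_list y a))"
    by (subst sum.reindex[OF inj]) (auto simp: \<delta>_def intro: sum.cong)
  also have "\<dots> = (\<Sum>g < count_list l a. f (g + \<delta>) (count_list l a - 1 - g))"
    using Cons.IH[of "\<lambda>g k. f (g + \<delta>) k"] by (simp add: S_def)
  finally show ?case
    by (cases "b = a") (simp_all del: sum.lessThan_Suc add: sum.lessThan_Suc_shift \<delta>_def)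
qed

lemma splits_snoc:
  "{(x, y). l @ [c] = x @ a # y \<and> y \<noteq> []} = (\<lambda>(x, y). (x, y @ [c])) ` {(x, y). l = x @ a # y}"
proof (intro equalityI subsetI)
  fix p assume "p \<in> {(x, y). l @ [c] = x @ a # y \<and> y \<noteq> []}"
  then obtain x y where p: "p = (x, y)" "l @ [c] = x @ a # y" "y \<noteq> []" by auto
  have "last (l @ [c]) = last (x @ a # y)" by (simp only: p(2))
  then have "last y = c" using p(3) by simp
  then obtain y' where y': "y = y' @ [c]" using p(3) by (metis append_butlast_last_id)
  then have "l = x @ a # y'" using p by simp
  then show "p \<in> (\<lambda>(x, y). (x, y @ [c])) ` {(x, y). l = x @ a # y}" using p y' by auto
qed auto

abbreviation proper_letters :: "enat list \<Rightarrow> enat list" where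
  "proper_letters z \<equiv> filter (\<lambda>a. a \<noteq> \<infinity> \<and> a \<noteq> 0) z"

text \<open>A permutation \<open>s\<close> of \<open>{1..m}\<close> is encoded as the word \<open>0 s e\<close> with sentinels \<open>0\<close> and
  \<open>e = 0\<close> (odd \<open>m\<close>) or \<open>e = \<infinity>\<close> (even \<open>m\<close>), so that \<open>s\<close> is falling alternating iff the word is
  alternating. Deleting the letters larger than \<open>v\<close> and replacing each maximal factor of deleted
  letters by one hole \<open>\<infinity>\<close> (a final factor merges into the sentinel \<open>\<infinity>\<close>) gives \<open>hole_words e v h\<close>.\<close>
definition hole_words :: "enat \<Rightarrow> nat \<Rightarrow> nat \<Rightarrow> enat list set" where
  "hole_words e v h = {z. z \<noteq> [] \<and> hd z = 0 \<and> last z = e \<and> alternating True z \<and>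
      count_list z 0 = (if e = 0 then 2 else 1) \<and> distinct (proper_letters z) \<and>
      set (proper_letters z) = enat ` {1..v} \<and> count_holes z = h}"

declare not_infinity_eq [iff del]

lemma hole_wordsD:
  assumes "z \<in> hole_words e v h"
  shows "z \<noteq> []" "hd z = 0" "last z = e" "alternating True z"
    "count_list z 0 = (if e = 0 then 2 else 1)" "distinct (proper_letters z)"
    "set (proper_letters z) = enat ` {1..v}" "count_holes z = h"
  using assms unfolding hole_words_def by blast+

lemma hole_wordsI:
  assumes "z \<noteq> []" "hd z = 0" "last z = e" "alternating True z"
    "count_list z 0 = (if e = 0 then 2 else 1)" "distinct (proper_letters z)"
    "set (proper_letters z) = enat ` {1..v}" "count_holes z = h"
  shows "z \<in> hole_words e v h"
  using assms unfolding hole_words_def by blast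

lemma hole_words_letters:
  assumes "z \<in> hole_words e v h" and "a \<in> set z"
  shows "a = \<infinity> \<or> a = 0 \<or> (\<exists>k. a = enat k \<and> 1 \<le> k \<and> k \<le> v)"
proof (cases "a = \<infinity> \<or> a = 0")
  case False
  then have "a \<in> set (proper_letters z)" using assms(2) by auto
  then have "a \<in> enat ` {1..v}" using hole_wordsD(7)[OF assms(1)] by (simp only:)
  then show ?thesis by auto
qed auto

lemma hole_words_letters_less:
  "z \<in> hole_words e v h \<Longrightarrow> a \<in> set z \<Longrightarrow> a = \<infinity> \<or> a < enat (Suc v)"
  by (drule hole_words_letters) (auto simp: zero_enat_def)

lemma hole_words_no_adjacent_holes: "z \<in> hole_words e v h \<Longrightarrow> no_adjacent_holes z"
  by (auto simp: hole_words_def intro: alternating_no_adjacent_holes)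

lemma hole_words_prefix_nonempty: "x @ \<infinity> # y \<in> hole_words e v h \<Longrightarrow> x \<noteq> []"
  by (auto simp: hole_words_def zero_enat_def)

lemma alternating_fill_hole:
  assumes "alternating True (x @ \<infinity> # y)" "x \<noteq> []" "y \<noteq> []" "last x < m" "hd y < m"
  shows "alternating True (x @ m # y)"
proof -
  obtain x0 \<alpha> where x: "x = x0 @ [\<alpha>]" using assms(2) by (metis append_butlast_last_id)
  obtain \<beta> y1 where y: "y = \<beta> # y1" using assms(3) by (cases y) auto
  have "alternating True (x0 @ [\<alpha>])" and "alternating (even (length x0)) (\<alpha> # \<infinity> # \<beta> # y1)"
    using assms(1) alternating_append[of True x0 \<alpha> "\<infinity> # \<beta> # y1"] x y
    by (simp_all del: alternating.simps)
  then have "alternating True (x0 @ \<alpha> # m # \<beta> # y1)"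
    unfolding alternating_append[of True x0 \<alpha> "m # \<beta> # y1"] using assms(4,5) x y
    by (auto split: if_splits)
  then show ?thesis using x y by simp
qed

lemma alternating_split_hole:
  assumes "alternating True (x @ \<infinity> # y)" "x \<noteq> []" "m \<noteq> \<infinity>"
  shows "alternating True (x @ \<infinity> # m # \<infinity> # y)"
proof -
  obtain x0 \<alpha> where x: "x = x0 @ [\<alpha>]" using assms(2) by (metis append_butlast_last_id)
  have "alternating True (x0 @ [\<alpha>])" and "alternating (even (length x0)) (\<alpha> # \<infinity> # y)"
    using assms(1) alternating_append[of True x0 \<alpha> "\<infinity> # y"] x by (simp_all del: alternating.simps)
  then have "alternating True (x0 @ \<alpha> # \<infinity> # m # \<infinity> # y)"
    unfolding alternating_append[of True x0 \<alpha> "\<infinity> # m # \<infinity> # y"] using assms(3)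
    by (auto split: if_splits)
  then show ?thesis using x by simp
qed

lemma alternating_remove_max:
  fixes m :: enat
  assumes alt: "alternating True (x @ m # y)" and "x \<noteq> []" "y \<noteq> []"
    and m: "m \<noteq> \<infinity>" and less: "\<forall>e \<in> set x \<union> set y. e = \<infinity> \<or> e < m"
  shows "(last x \<noteq> \<infinity> \<and> hd y \<noteq> \<infinity> \<and> alternating True (x @ \<infinity> # y)) \<or>
         (last x = \<infinity> \<and> hd y = \<infinity> \<and> alternating True (butlast x @ \<infinity> # tl y))"
proof -
  obtain x0 \<alpha> where x: "x = x0 @ [\<alpha>]" using \<open>x \<noteq> []\<close> by (metis append_butlast_last_id)
  obtain \<beta> y1 where y: "y = \<beta> # y1" using \<open>y \<noteq> []\<close> by (cases y) auto
  have \<alpha>: "\<alpha> = \<infinity> \<or> \<alpha> < m" and \<beta>: "\<beta> = \<infinity> \<or> \<beta> < m" using less x y by auto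
  have a1: "alternating True (x0 @ [\<alpha>])" and a2: "alternating (even (length x0)) (\<alpha> # m # \<beta> # y1)"
    using alt alternating_append[of True x0 \<alpha> "m # \<beta> # y1"] x y by (simp_all del: alternating.simps)
  show ?thesis
  proof (cases "\<alpha> = \<infinity>")
    case False
    with \<alpha> a2 have "even (length x0)" "\<beta> < m" "alternating True (\<beta> # y1)" "\<alpha> \<noteq> \<infinity>"
      by (auto split: if_splits)
    moreover from \<open>\<beta> < m\<close> have "\<beta> \<noteq> \<infinity>" by auto
    ultimately have "alternating True (x0 @ \<alpha> # \<infinity> # \<beta> # y1)"
      unfolding alternating_append[of True x0 \<alpha> "\<infinity> # \<beta> # y1"] using a1 by auto
    then show ?thesis using x y \<open>\<alpha> \<noteq> \<infinity>\<close> \<open>\<beta> \<noteq> \<infinity>\<close> by simp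
  next
    case True
    with a2 have "odd (length x0)" "m < \<beta>" "alternating False (\<beta> # y1)"
      by (auto split: if_splits)
    moreover from \<open>m < \<beta>\<close> \<beta> have "\<beta> = \<infinity>" by auto
    ultimately have "alternating True (x0 @ \<infinity> # y1)"
      unfolding alternating_append[of True x0 \<infinity> y1] using a1 True by auto
    then show ?thesis using x y True \<open>\<beta> = \<infinity>\<close> by simp
  qed
qed

lemma proper_letters_insert_max:
  assumes "\<forall>a \<in> set x \<union> set y. a = \<infinity> \<or> a < enat (Suc v)"
    and "distinct (proper_letters (x @ y))" "set (proper_letters (x @ y)) = enat ` {1..v}"
  shows "distinct (proper_letters (x @ enat (Suc v) # y))"
    "set (proper_letters (x @ enat (Suc v) # y)) = enat ` {1..Suc v}"
  using assms by (auto simp: zero_enat_def atLeastAtMostSuc_conv)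

lemma fill_hole_in_hole_words:
  assumes z: "x @ \<infinity> # y \<in> hole_words e v (Suc h)" and "y \<noteq> []"
  shows "x @ enat (Suc v) # y \<in> hole_words e (Suc v) h"
proof -
  note zD = hole_wordsD[OF z]
  have "x \<noteq> []" using hole_words_prefix_nonempty[OF z] .
  have less: "\<forall>a \<in> set x \<union> set y. a = \<infinity> \<or> a < enat (Suc v)"
    using hole_words_letters_less[OF z] by auto
  have "last x \<noteq> \<infinity>" "hd y \<noteq> \<infinity>"
    using no_adjacent_holes_around[OF hole_words_no_adjacent_holes[OF z]] \<open>x \<noteq> []\<close> \<open>y \<noteq> []\<close> by auto
  then have "last x < enat (Suc v)" "hd y < enat (Suc v)"
    using less last_in_set[OF \<open>x \<noteq> []\<close>] hd_in_set[OF \<open>y \<noteq> []\<close>] by blast+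
  then have "alternating True (x @ enat (Suc v) # y)"
    using alternating_fill_hole[OF zD(4) \<open>x \<noteq> []\<close> \<open>y \<noteq> []\<close>] by blast
  then show ?thesis
    using zD proper_letters_insert_max[OF less] \<open>x \<noteq> []\<close> \<open>y \<noteq> []\<close>
    by (intro hole_wordsI) (auto simp: zero_enat_def)
qed

lemma split_hole_in_hole_words:
  assumes z: "x @ \<infinity> # y \<in> hole_words e v h"
  shows "x @ \<infinity> # enat (Suc v) # \<infinity> # y \<in> hole_words e (Suc v) (Suc h)"
proof -
  note zD = hole_wordsD[OF z]
  have "x \<noteq> []" using hole_words_prefix_nonempty[OF z] .
  have less: "\<forall>a \<in> set (x @ [\<infinity>]) \<union> set (\<infinity> # y). a = \<infinity> \<or> a < enat (Suc v)"
    using hole_words_letters_less[OF z] by auto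
  have "last (x @ \<infinity> # enat (Suc v) # \<infinity> # y) = last (x @ \<infinity> # y)" by (cases y) auto
  moreover have "alternating True (x @ \<infinity> # enat (Suc v) # \<infinity> # y)"
    using alternating_split_hole[OF zD(4) \<open>x \<noteq> []\<close>] by simp
  ultimately show ?thesis
    using zD proper_letters_insert_max[OF less] \<open>x \<noteq> []\<close>
    by (intro hole_wordsI) (auto simp: zero_enat_def)
qed

lemma max_notin_hole_word:
  "x @ \<infinity> # y \<in> hole_words e v h \<Longrightarrow> enat (Suc v) \<notin> set x \<and> enat (Suc v) \<notin> set y"
  using hole_words_letters_less[of "x @ \<infinity> # y" e v h "enat (Suc v)"] by auto

lemma max_in_hole_word:
  assumes z: "x @ enat (Suc v) # y \<in> hole_words e (Suc v) h" and e: "e = 0 \<or> e = \<infinity>"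
  shows "x \<noteq> []" "y \<noteq> []" "\<forall>a \<in> set x \<union> set y. a = \<infinity> \<or> a < enat (Suc v)"
    and "distinct (proper_letters x @ proper_letters y)"
    and "set (proper_letters x) \<union> set (proper_letters y) = enat ` {1..v}"
proof -
  let ?m = "enat (Suc v)"
  note zD = hole_wordsD[OF z]
  have m0: "?m \<noteq> 0" "?m \<noteq> \<infinity>" by (auto simp: zero_enat_def)
  show "x \<noteq> []" using zD(2) m0 by (cases x) auto
  show "y \<noteq> []" using zD(3) m0 e by (cases y rule: rev_cases) auto
  have dis: "distinct (proper_letters x @ ?m # proper_letters y)" using zD(6) m0 by simp
  then show "distinct (proper_letters x @ proper_letters y)" by auto
  show "\<forall>a \<in> set x \<union> set y. a = \<infinity> \<or> a < ?m"
  proof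
    fix a assume a: "a \<in> set x \<union> set y"
    then have "a = \<infinity> \<or> a = 0 \<or> (\<exists>k. a = enat k \<and> 1 \<le> k \<and> k \<le> Suc v)"
      using hole_words_letters[OF z] by auto
    moreover have "a \<noteq> ?m" using a dis m0 by auto
    ultimately show "a = \<infinity> \<or> a < ?m" by (auto simp: zero_enat_def)
  qed
  have "set (proper_letters x) \<union> set (proper_letters y) = set (proper_letters (x @ ?m # y)) - {?m}"
    using dis m0 by auto
  also have "\<dots> = enat ` {1..v}" using zD(7) by auto
  finally show "set (proper_letters x) \<union> set (proper_letters y) = enat ` {1..v}" .
qed

lemma remove_max_at_peak:
  assumes z: "x @ enat (Suc v) # y \<in> hole_words e (Suc v) h" and e: "e = 0 \<or> e = \<infinity>"
    and peak: "last x \<noteq> \<infinity>"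
  shows "x @ \<infinity> # y \<in> hole_words e v (Suc h)"
proof -
  note zD = hole_wordsD[OF z] and M = max_in_hole_word[OF z e]
  have "alternating True (x @ \<infinity> # y)"
    using alternating_remove_max[OF zD(4) M(1,2) _ M(3)] peak by auto
  then show ?thesis using zD M(1,2,4,5) by (intro hole_wordsI) (auto simp: zero_enat_def)
qed

lemma remove_max_in_valley:
  assumes z: "x @ enat (Suc v) # y \<in> hole_words e (Suc v) h" and e: "e = 0 \<or> e = \<infinity>"
    and valley: "last x = \<infinity>"
  obtains x0 y1 h' where "x = x0 @ [\<infinity>]" "y = \<infinity> # y1" "h = Suc h'" "x0 @ \<infinity> # y1 \<in> hole_words e v h'"
proof -
  note zD = hole_wordsD[OF z] and M = max_in_hole_word[OF z e]
  have hy: "hd y = \<infinity>" and alt: "alternating True (butlast x @ \<infinity> # tl y)"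
    using alternating_remove_max[OF zD(4) M(1,2) _ M(3)] valley by auto
  obtain x0 where x: "x = x0 @ [\<infinity>]" using M(1) valley by (metis append_butlast_last_id)
  obtain y1 where y: "y = \<infinity> # y1" using M(2) hy by (cases y) auto
  have x0: "x0 \<noteq> []" using zD(2) x by (cases x0) auto
  obtain h' where h: "h = Suc h'" using zD(8) x y by (cases h) auto
  have "last (x0 @ \<infinity> # y1) = e" using zD(3) x y by (cases y1) auto
  then have "x0 @ \<infinity> # y1 \<in> hole_words e v h'"
    using zD M(4,5) alt x y x0 h by (intro hole_wordsI) (auto simp: zero_enat_def)
  then show thesis using that x y h by blast
qed

definition word_stat :: "enat \<Rightarrow> enat list \<Rightarrow> nat" where
  "word_stat e z = occ_31_2 z + 2 * (if e = 0 then occ_2_13 z else occ_2_31 z)"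

lemma word_stat_fill_hole:
  assumes z: "x @ \<infinity> # y \<in> hole_words e v (Suc h)" and "y \<noteq> []" and e: "e = 0 \<or> e = \<infinity>"
  shows "word_stat e (x @ enat (Suc v) # y) =
    word_stat e (x @ \<infinity> # y) + count_holes x +
    2 * (if e = 0 then count_holes y else count_holes y - 1)"
proof -
  have m: "enat (Suc v) \<noteq> \<infinity>" by simp
  have "x \<noteq> []" using hole_words_prefix_nonempty[OF z] .
  note na = no_adjacent_holes_around[OF hole_words_no_adjacent_holes[OF z]]
  have less: "\<forall>a \<in> set x \<union> set y. a = \<infinity> \<or> a < enat (Suc v)"
    using hole_words_letters_less[OF z] by auto
  have "count_adjacent hole_then_letter x = count_holes x"
    using count_hole_then_letter[OF na(1)] na(3) \<open>x \<noteq> []\<close> by simp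
  moreover have "count_adjacent letter_then_hole y = count_holes y"
    using count_letter_then_hole[OF na(2)] na(4) \<open>y \<noteq> []\<close> by simp
  moreover have "e = \<infinity> \<Longrightarrow> count_adjacent hole_then_letter y = count_holes y - 1"
    using count_hole_then_letter[OF na(2)] hole_wordsD(3)[OF z] \<open>y \<noteq> []\<close> by simp
  ultimately show ?thesis
    using pattern_count_fill_31_2[OF m less] pattern_count_fill_2_13[OF m less]
      pattern_count_fill_2_31[OF m less] e
    by (auto simp: word_stat_def)
qed

lemma word_stat_split_hole:
  assumes z: "x @ \<infinity> # y \<in> hole_words e v h" and e: "e = 0 \<or> e = \<infinity>"
  shows "word_stat e (x @ \<infinity> # enat (Suc v) # \<infinity> # y) =
    word_stat e (x @ \<infinity> # y) + count_holes x + 2 * count_holes y"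
proof -
  let ?m = "enat (Suc v)"
  have m: "?m \<noteq> \<infinity>" by simp
  have "x \<noteq> []" using hole_words_prefix_nonempty[OF z] .
  note na = no_adjacent_holes_around[OF hole_words_no_adjacent_holes[OF z]]
  have less: "\<forall>a \<in> set (x @ [\<infinity>]) \<union> set (\<infinity> # y). a = \<infinity> \<or> a < ?m"
    using hole_words_letters_less[OF z] by auto
  have na_x: "no_adjacent_holes (x @ [\<infinity>])"
    using na(1,3) \<open>x \<noteq> []\<close> by (simp add: no_adjacent_holes_append)
  have na_y: "no_adjacent_holes (\<infinity> # y)" using na(2,4) by (auto simp: no_adjacent_holes_Cons)
  have "count_adjacent hole_then_letter (x @ [\<infinity>]) = count_holes x"
    using count_hole_then_letter[OF na_x] by simp
  moreover have "count_adjacent letter_then_hole (\<infinity> # y) = count_holes y"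
    using count_letter_then_hole[OF na_y] by simp
  moreover have "e = \<infinity> \<Longrightarrow> count_adjacent hole_then_letter (\<infinity> # y) = count_holes y"
    using count_hole_then_letter[OF na_y] hole_wordsD(3)[OF z] by (cases y) auto
  moreover have "pattern_count Q R (x @ \<infinity> # \<infinity> # \<infinity> # y) = pattern_count Q R (x @ \<infinity> # y)"
    if "Q = before_pair \<and> R = between_asc \<or> (Q = after_pair \<or> Q = before_pair) \<and> R = between_desc"
    for Q R
    using that pattern_count_double_hole_desc[of Q x] occ_2_13_double_hole[of x] by fastforce
  ultimately show ?thesis
    using pattern_count_fill_31_2[OF m less] pattern_count_fill_2_13[OF m less]
      pattern_count_fill_2_31[OF m less] e
    by (auto simp: word_stat_def)
qed

lemma finite_hole_words: "finite (hole_words e v h)"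
proof (rule finite_subset)
  show "hole_words e v h \<subseteq> {z. set z \<subseteq> insert \<infinity> (enat ` {0..v}) \<and> length z \<le> v + (h + 2)}"
  proof (rule subsetI, intro CollectI conjI)
    fix z assume z: "z \<in> hole_words e v h"
    show "set z \<subseteq> insert \<infinity> (enat ` {0..v})"
      using hole_words_letters[OF z] by (force simp: zero_enat_def)
    have "card (enat ` {1..v}) = v" by (subst card_image) (auto simp: inj_on_def)
    then have "length (proper_letters z) = v"
      using distinct_card[OF hole_wordsD(6)[OF z]] hole_wordsD(7)[OF z] by metis
    moreover have "length (filter (\<lambda>a. a = \<infinity> \<or> a = 0) z) \<le> count_holes z + count_list z 0"
      by (induction z) auto
    moreover have "length z = length (proper_letters z) + length (filter (\<lambda>a. a = \<infinity> \<or> a = 0) z)"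
      using sum_length_filter_compl[of "\<lambda>a. a \<noteq> \<infinity> \<and> a \<noteq> 0" z] by simp
    ultimately show "length z \<le> v + (h + 2)" using hole_wordsD(5,8)[OF z] by (auto split: if_splits)
  qed
  show "finite {z. set z \<subseteq> insert \<infinity> (enat ` {0..v}) \<and> length z \<le> v + (h + 2)}"
    by (rule finite_lists_length_le) simp
qed

definition hole_weight :: "'a::field \<Rightarrow> nat \<Rightarrow> 'a" where
  "hole_weight q N = (\<Sum>g<N. q ^ (g + 2 * (N - 1 - g)))"

definition hole_words_gf :: "'a::field \<Rightarrow> enat \<Rightarrow> nat \<Rightarrow> nat \<Rightarrow> 'a" where
  "hole_words_gf q e v h = (\<Sum>z \<in> hole_words e v h. q ^ word_stat e z)"

lemma hole_weight_0 [simp]: "hole_weight q 0 = 0"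
  by (simp add: hole_weight_def)

lemma hole_weight_eq: "hole_weight q N = q ^ (N - 1) * qint N q"
proof -
  have "g + 2 * (N - 1 - g) = (N - 1) + (N - Suc g)" if "g < N" for g using that by arith
  then have "hole_weight q N = (\<Sum>g<N. q ^ (N - 1) * q ^ (N - Suc g))"
    unfolding hole_weight_def by (intro sum.cong refl) (simp add: power_add[symmetric])
  also have "\<dots> = q ^ (N - 1) * (\<Sum>g<N. q ^ (N - Suc g))" by (simp add: sum_distrib_left)
  also have "(\<Sum>g<N. q ^ (N - Suc g)) = qint N q" unfolding qint_def by (rule sum.nat_diff_reindex)
  finally show ?thesis .
qed

definition hole_splits :: "enat list \<Rightarrow> (enat list \<times> enat list) set" where
  "hole_splits z = {(x, y). z = x @ \<infinity> # y}"

definition hole_splits_nonfinal :: "enat list \<Rightarrow> (enat list \<times> enat list) set" where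
  "hole_splits_nonfinal z = {(x, y). z = x @ \<infinity> # y \<and> y \<noteq> []}"

lemma finite_hole_splits: "finite (hole_splits z)"
  unfolding hole_splits_def by (rule finite_splits)

lemma finite_hole_splits_nonfinal: "finite (hole_splits_nonfinal z)"
  by (rule finite_subset[OF _ finite_hole_splits[of z]])
     (auto simp: hole_splits_def hole_splits_nonfinal_def)

lemma sum_hole_splits:
  "(\<Sum>(x, y) \<in> hole_splits z. (q::'a::field) ^ (count_holes x + 2 * count_holes y)) =
    hole_weight q (count_holes z)"
  unfolding hole_splits_def hole_weight_def
  using sum_splits[where f = "\<lambda>g k. q ^ (g + 2 * k)" and l = z and a = \<infinity>] by simp

lemma sum_hole_splits_nonfinal:
  assumes z: "z \<in> hole_words e v N" and e: "e = 0 \<or> e = \<infinity>"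
  shows "(\<Sum>(x, y) \<in> hole_splits_nonfinal z.
      (q::'a::field) ^ (count_holes x + 2 * (if e = 0 then count_holes y else count_holes y - 1)))
     = (if e = 0 then hole_weight q N else hole_weight q (N - 1))"
proof (cases "e = 0")
  case True
  have "hole_splits_nonfinal z = hole_splits z"
    using hole_wordsD(3)[OF z] True
    by (auto simp: hole_splits_def hole_splits_nonfinal_def zero_enat_def)
  then show ?thesis using True sum_hole_splits[of q z] hole_wordsD(8)[OF z] by simp
next
  case False
  with e have "e = \<infinity>" by simp
  then obtain z0 where z0: "z = z0 @ [\<infinity>]"
    using hole_wordsD(1,3)[OF z] by (metis append_butlast_last_id)
  have "hole_splits_nonfinal z = (\<lambda>(x, y). (x, y @ [\<infinity>])) ` hole_splits z0"
    unfolding hole_splits_nonfinal_def hole_splits_def z0 by (rule splits_snoc)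
  moreover have "inj_on (\<lambda>(x, y). (x, y @ [\<infinity>])) (hole_splits z0)" by (auto simp: inj_on_def)
  ultimately have "(\<Sum>(x, y) \<in> hole_splits_nonfinal z. q ^ (count_holes x + 2 * (count_holes y - 1)))
      = (\<Sum>(x, y) \<in> hole_splits z0. q ^ (count_holes x + 2 * count_holes y))"
    by (simp add: sum.reindex case_prod_unfold)
  also have "\<dots> = hole_weight q (count_holes z0)" by (rule sum_hole_splits)
  also have "count_holes z0 = N - 1" using hole_wordsD(8)[OF z] z0 by simp
  finally show ?thesis using \<open>e = \<infinity>\<close> by simp
qed

section \<open>Inserting the largest letter\<close>

lemma max_in_set_hole_word:
  assumes "z \<in> hole_words e (Suc v) h"
  shows "enat (Suc v) \<in> set z"
proof -
  have "enat (Suc v) \<in> set (proper_letters z)" using hole_wordsD(7)[OF assms] by simp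
  then show ?thesis by simp
qed

definition max_at_peak :: "enat \<Rightarrow> nat \<Rightarrow> nat \<Rightarrow> enat list set" where
  "max_at_peak e v h =
     {z \<in> hole_words e (Suc v) h. \<exists>x y. z = x @ enat (Suc v) # y \<and> last x \<noteq> \<infinity>}"

lemma bij_betw_fill_hole:
  assumes e: "e = 0 \<or> e = \<infinity>"
  shows "bij_betw (\<lambda>(z', x, y). x @ enat (Suc v) # y)
    (Sigma (hole_words e v (Suc h)) hole_splits_nonfinal) (max_at_peak e v h)"
proof (rule bij_betw_imageI)
  let ?f = "\<lambda>(z', x, y). x @ enat (Suc v) # y"
    and ?S = "Sigma (hole_words e v (Suc h)) hole_splits_nonfinal"
  show "inj_on ?f ?S"
    by (auto simp: inj_on_def hole_splits_nonfinal_def append_Cons_eq_iff dest: max_notin_hole_word)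
  show "?f ` ?S = max_at_peak e v h"
  proof (intro equalityI subsetI)
    fix z assume "z \<in> ?f ` ?S"
    then obtain x y
      where xy: "x @ \<infinity> # y \<in> hole_words e v (Suc h)" "y \<noteq> []" "z = x @ enat (Suc v) # y"
      by (auto simp: hole_splits_nonfinal_def)
    have "last x \<noteq> \<infinity>"
      using no_adjacent_holes_around(3)[OF hole_words_no_adjacent_holes[OF xy(1)]]
        hole_words_prefix_nonempty[OF xy(1)] by blast
    then show "z \<in> max_at_peak e v h"
      using fill_hole_in_hole_words[OF xy(1,2)] xy(3) by (auto simp: max_at_peak_def)
  next
    fix z assume "z \<in> max_at_peak e v h"
    then obtain x y where z: "x @ enat (Suc v) # y \<in> hole_words e (Suc v) h"
        "z = x @ enat (Suc v) # y" "last x \<noteq> \<infinity>"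
      by (auto simp: max_at_peak_def)
    then have "(x @ \<infinity> # y, x, y) \<in> ?S"
      using remove_max_at_peak[OF z(1) e z(3)] max_in_hole_word(2)[OF z(1) e]
      by (auto simp: hole_splits_nonfinal_def)
    then show "z \<in> ?f ` ?S" using z(2) by force
  qed
qed

lemma inj_on_split_hole:
  "inj_on (\<lambda>(z', x, y). x @ \<infinity> # enat (Suc v) # \<infinity> # y) (Sigma (hole_words e v h) hole_splits)"
proof (rule inj_onI)
  fix a b
  assume "a \<in> Sigma (hole_words e v h) hole_splits" "b \<in> Sigma (hole_words e v h) hole_splits"
    and eq: "(\<lambda>(z', x, y). x @ \<infinity> # enat (Suc v) # \<infinity> # y) a =
      (\<lambda>(z', x, y). x @ \<infinity> # enat (Suc v) # \<infinity> # y) b"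
  then obtain x1 y1 x2 y2 where ab: "a = (x1 @ \<infinity> # y1, x1, y1)" "b = (x2 @ \<infinity> # y2, x2, y2)"
    and z: "x1 @ \<infinity> # y1 \<in> hole_words e v h"
    by (auto simp: hole_splits_def)
  have m: "enat (Suc v) \<notin> set (x1 @ [\<infinity>])" "enat (Suc v) \<notin> set (\<infinity> # y1)"
    using max_notin_hole_word[OF z] by auto
  have "(x1 @ [\<infinity>]) @ enat (Suc v) # \<infinity> # y1 = (x2 @ [\<infinity>]) @ enat (Suc v) # \<infinity> # y2"
    using eq ab by simp
  then have "x1 @ [\<infinity>] = x2 @ [\<infinity>] \<and> \<infinity> # y1 = \<infinity> # y2"
    by (simp only: append_Cons_eq_iff[OF m])
  then show "a = b" using ab by simp
qed

lemma bij_betw_split_hole: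
  assumes e: "e = 0 \<or> e = \<infinity>"
  shows "bij_betw (\<lambda>(z', x, y). x @ \<infinity> # enat (Suc v) # \<infinity> # y)
    (Sigma (hole_words e v h) hole_splits) (hole_words e (Suc v) (Suc h) - max_at_peak e v (Suc h))"
proof (rule bij_betw_imageI[OF inj_on_split_hole])
  let ?m = "enat (Suc v)"
  let ?f = "\<lambda>(z', x, y). x @ \<infinity> # ?m # \<infinity> # y" and ?S = "Sigma (hole_words e v h) hole_splits"
  show "?f ` ?S = hole_words e (Suc v) (Suc h) - max_at_peak e v (Suc h)"
  proof (intro equalityI subsetI)
    fix z assume "z \<in> ?f ` ?S"
    then obtain x y where xy: "x @ \<infinity> # y \<in> hole_words e v h" "z = x @ \<infinity> # ?m # \<infinity> # y"
      by (auto simp: hole_splits_def)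
    have "z \<notin> max_at_peak e v (Suc h)"
    proof
      assume "z \<in> max_at_peak e v (Suc h)"
      then obtain x' y'
        where z': "z \<in> hole_words e (Suc v) (Suc h)" "z = x' @ ?m # y'" "last x' \<noteq> \<infinity>"
        by (auto simp: max_at_peak_def)
      then have notin: "?m \<notin> set x'" "?m \<notin> set y'" using max_in_hole_word(3)[of x' v y' e] e by auto
      have "x' @ ?m # y' = (x @ [\<infinity>]) @ ?m # \<infinity> # y" using z'(2) xy(2) by simp
      then have "x' = x @ [\<infinity>]" by (simp only: append_Cons_eq_iff[OF notin])
      then show False using z'(3) by simp
    qed
    then show "z \<in> hole_words e (Suc v) (Suc h) - max_at_peak e v (Suc h)"
      using split_hole_in_hole_words[OF xy(1)] xy(2) by simp
  next
    fix z assume z: "z \<in> hole_words e (Suc v) (Suc h) - max_at_peak e v (Suc h)"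
    then obtain x y where zd: "z = x @ ?m # y"
      using max_in_set_hole_word by (meson DiffD1 split_list)
    then have "last x = \<infinity>" using z by (auto simp: max_at_peak_def)
    with z zd obtain x0 y1 h' where "x = x0 @ [\<infinity>]" "y = \<infinity> # y1" "Suc h = Suc h'"
        "x0 @ \<infinity> # y1 \<in> hole_words e v h'"
      using remove_max_in_valley[of x v y e "Suc h"] e by blast
    then show "z \<in> ?f ` ?S" using zd by (auto simp: hole_splits_def image_iff)
  qed
qed

lemma max_at_peak_no_holes:
  assumes e: "e = 0 \<or> e = \<infinity>"
  shows "max_at_peak e v 0 = hole_words e (Suc v) 0"
proof -
  have "z \<in> max_at_peak e v 0" if z: "z \<in> hole_words e (Suc v) 0" for z
  proof -
    obtain x y where zd: "z = x @ enat (Suc v) # y"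
      using max_in_set_hole_word[OF z] by (meson split_list)
    have "last x \<noteq> \<infinity>" using remove_max_in_valley[of x v y e 0] z zd e by auto
    then show ?thesis using z zd by (auto simp: max_at_peak_def)
  qed
  then show ?thesis by (auto simp: max_at_peak_def)
qed

lemma sum_bij_betw_Sigma:
  fixes f :: "'a \<Rightarrow> 'b::semiring_0"
  assumes "bij_betw g (Sigma A B) C" "finite A" "\<And>a. a \<in> A \<Longrightarrow> finite (B a)"
    and "\<And>a b. a \<in> A \<Longrightarrow> b \<in> B a \<Longrightarrow> f (g (a, b)) = f a * w b"
  shows "sum f C = (\<Sum>a\<in>A. f a * sum w (B a))"
proof -
  have "sum f C = (\<Sum>p\<in>Sigma A B. f (g p))"
    by (rule sum.reindex_bij_betw[OF assms(1), symmetric])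
  also have "\<dots> = (\<Sum>a\<in>A. \<Sum>b\<in>B a. f (g (a, b)))" using assms(2,3) by (simp add: sum.Sigma)
  also have "\<dots> = (\<Sum>a\<in>A. \<Sum>b\<in>B a. f a * w b)" by (intro sum.cong refl) (simp add: assms(4))
  also have "\<dots> = (\<Sum>a\<in>A. f a * sum w (B a))" by (simp only: sum_distrib_left)
  finally show ?thesis .
qed

lemma sum_max_at_peak:
  fixes q :: "'a::field"
  assumes e: "e = 0 \<or> e = \<infinity>"
  shows "(\<Sum>z \<in> max_at_peak e v h. q ^ word_stat e z) =
    (if e = 0 then hole_weight q (Suc h) else hole_weight q h) * hole_words_gf q e v (Suc h)"
proof -
  have "(\<Sum>z \<in> max_at_peak e v h. q ^ word_stat e z) =
      (\<Sum>z' \<in> hole_words e v (Suc h). q ^ word_stat e z' * (\<Sum>(x, y) \<in> hole_splits_nonfinal z'.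
         q ^ (count_holes x + 2 * (if e = 0 then count_holes y else count_holes y - 1))))"
    by (rule sum_bij_betw_Sigma[OF bij_betw_fill_hole[OF e] finite_hole_words
          finite_hole_splits_nonfinal])
       (auto simp: hole_splits_nonfinal_def word_stat_fill_hole e power_add)
  also have "\<dots> = (\<Sum>z' \<in> hole_words e v (Suc h).
      q ^ word_stat e z' * (if e = 0 then hole_weight q (Suc h) else hole_weight q h))"
    by (rule sum.cong[OF refl]) (simp add: sum_hole_splits_nonfinal e)
  also have "\<dots> =
      (if e = 0 then hole_weight q (Suc h) else hole_weight q h) * hole_words_gf q e v (Suc h)"
    by (simp add: hole_words_gf_def sum_distrib_left mult.commute)
  finally show ?thesis .
qed

lemma sum_max_in_valley:
  fixes q :: "'a::field"
  assumes e: "e = 0 \<or> e = \<infinity>"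
  shows "(\<Sum>z \<in> hole_words e (Suc v) (Suc h) - max_at_peak e v (Suc h). q ^ word_stat e z) =
    hole_weight q h * hole_words_gf q e v h"
proof -
  have "(\<Sum>z \<in> hole_words e (Suc v) (Suc h) - max_at_peak e v (Suc h). q ^ word_stat e z) =
      (\<Sum>z' \<in> hole_words e v h. q ^ word_stat e z' *
        (\<Sum>(x, y) \<in> hole_splits z'. q ^ (count_holes x + 2 * count_holes y)))"
    by (rule sum_bij_betw_Sigma[OF bij_betw_split_hole[OF e] finite_hole_words finite_hole_splits])
       (auto simp: hole_splits_def word_stat_split_hole e power_add)
  also have "\<dots> = (\<Sum>z' \<in> hole_words e v h. q ^ word_stat e z' * hole_weight q h)"
    by (rule sum.cong[OF refl]) (simp only: sum_hole_splits hole_wordsD(8))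
  also have "\<dots> = hole_weight q h * hole_words_gf q e v h"
    by (simp add: hole_words_gf_def sum_distrib_left mult.commute)
  finally show ?thesis .
qed

lemma hole_words_gf_rec:
  fixes q :: "'a::field"
  assumes e: "e = 0 \<or> e = \<infinity>"
  shows "hole_words_gf q e (Suc v) h =
    (if e = 0 then hole_weight q (Suc h) else hole_weight q h) * hole_words_gf q e v (Suc h)
    + (if h = 0 then 0 else hole_weight q (h - 1) * hole_words_gf q e v (h - 1))"
proof -
  have "max_at_peak e v h \<subseteq> hole_words e (Suc v) h" by (auto simp: max_at_peak_def)
  then have split: "hole_words_gf q e (Suc v) h =
      (\<Sum>z \<in> max_at_peak e v h. q ^ word_stat e z) +
      (\<Sum>z \<in> hole_words e (Suc v) h - max_at_peak e v h. q ^ word_stat e z)"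
    unfolding hole_words_gf_def using finite_hole_words by (simp add: sum.subset_diff)
  show ?thesis
  proof (cases h)
    case 0
    then show ?thesis
      using split sum_max_at_peak[OF e, where v = v and h = 0 and q = q] max_at_peak_no_holes[OF e]
      by simp
  next
    case (Suc h')
    then show ?thesis
      using split sum_max_at_peak[OF e, where v = v and h = h and q = q]
        sum_max_in_valley[OF e, where v = v and h = h' and q = q] by simp
  qed
qed

section \<open>Boundary values of the recursion\<close>

lemma hole_words_0_elem:
  assumes z: "z \<in> hole_words e 0 h" and e: "e = 0 \<or> e = \<infinity>"
  shows "z = (if e = 0 then [0, \<infinity>, 0] else [0, \<infinity>]) \<and> h = 1"
proof -
  note zD = hole_wordsD[OF z]
  have only: "\<forall>a \<in> set z. a = 0 \<or> a = \<infinity>" using hole_words_letters[OF z] by auto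
  obtain r where r: "z = 0 # r" using zD(1,2) by (cases z) auto
  show ?thesis
  proof (cases r)
    case Nil
    then show ?thesis using zD(3,5) r e by auto
  next
    case r1: (Cons a r1)
    then have a: "a = \<infinity>" using zD(4) r only by (auto simp: zero_enat_def)
    show ?thesis
    proof (cases r1)
      case Nil
      then show ?thesis using zD(3,8) r r1 a by auto
    next
      case r2: (Cons b r2)
      then have b: "b = 0" using zD(4) r r1 a only by auto
      then have e0: "e = 0" and "0 \<notin> set r2"
        using zD(5) r r1 r2 a e by (auto simp: count_list_0_iff[symmetric] split: if_splits)
      show ?thesis
      proof (cases r2)
        case Nil
        then show ?thesis using zD(8) r r1 r2 a b e0 by auto
      next
        case r3: (Cons c r3)
        then have c: "c = \<infinity>" using zD(4) r r1 r2 a b only \<open>0 \<notin> set r2\<close> by (auto simp: zero_enat_def)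
        show ?thesis
        proof (cases r3)
          case Nil
          then show ?thesis using zD(3) r r1 r2 r3 c e0 by auto
        next
          case (Cons d r4)
          then have "d = 0" using zD(4) r r1 r2 r3 a b c only by auto
          then show ?thesis using \<open>0 \<notin> set r2\<close> r3 Cons by simp
        qed
      qed
    qed
  qed
qed

lemma hole_words_0:
  assumes e: "e = 0 \<or> e = \<infinity>"
  shows "hole_words e 0 h = (if h = 1 then {if e = 0 then [0, \<infinity>, 0] else [0, \<infinity>]} else {})"
proof -
  let ?z = "if e = 0 then [0, \<infinity>, 0] else [0, \<infinity>::enat]"
  have "?z \<in> hole_words e 0 1"
    using e by (intro hole_wordsI) (auto simp: zero_enat_def)
  moreover have "hole_words e 0 h \<subseteq> (if h = 1 then {?z} else {})"
    using hole_words_0_elem[OF _ e] by fastforce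
  ultimately show ?thesis by (cases "h = 1") auto
qed

lemma pattern_count_0_inf:
  assumes "\<forall>a \<in> set z. a = 0 \<or> a = (\<infinity>::enat)"
  shows "pattern_count Q between_desc z = 0" "pattern_count Q between_asc z = 0"
proof -
  have "z ! k = 0 \<or> z ! k = \<infinity>" if "k < length z" for k using assms nth_mem[OF that] by blast
  then have "occurrences Q between_desc z = {}" "occurrences Q between_asc z = {}"
    by (fastforce simp: occurrences_def between_desc_def between_asc_def)+
  then show "pattern_count Q between_desc z = 0" "pattern_count Q between_asc z = 0"
    by (simp_all add: pattern_count_def)
qed

lemma hole_words_gf_0:
  assumes "e = 0 \<or> e = \<infinity>"
  shows "hole_words_gf q e 0 h = (if h = 1 then 1 else 0)"
proof -
  have "word_stat e (if e = 0 then [0, \<infinity>, 0] else [0, \<infinity>]) = 0"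
    using pattern_count_0_inf[of "[0, \<infinity>, 0]"] pattern_count_0_inf[of "[0, \<infinity>]"]
    by (auto simp: word_stat_def)
  then show ?thesis unfolding hole_words_gf_def hole_words_0[OF assms] by simp
qed

lemma alternating_iff_nth:
  "alternating up l \<longleftrightarrow>
    (\<forall>i. Suc i < length l \<longrightarrow> (if up = even i then l ! i < l ! Suc i else l ! Suc i < l ! i))"
proof (induction up l rule: alternating.induct)
  case (1 up a b r)
  have "(\<forall>i. Suc i < length (a # b # r) \<longrightarrow>
      (if up = even i then (a # b # r) ! i < (a # b # r) ! Suc i
       else (a # b # r) ! Suc i < (a # b # r) ! i))
    \<longleftrightarrow> (if up then a < b else b < a) \<and> (\<forall>i. Suc i < length (b # r) \<longrightarrow>
      (if (\<not> up) = even i then (b # r) ! i < (b # r) ! Suc i else (b # r) ! Suc i < (b # r) ! i))"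
    (is "(\<forall>i. ?P i) \<longleftrightarrow> ?Q")
  proof
    assume "\<forall>i. ?P i"
    then show ?Q by (auto dest: spec[of _ 0] spec[of _ "Suc _"])
  next
    assume ?Q
    show "\<forall>i. ?P i"
    proof
      fix i
      show "?P i" using \<open>?Q\<close> by (cases i) auto
    qed
  qed
  then show ?case using "1.IH" by simp
qed simp_all

lemma alternating_wrap_iff:
  assumes s: "set s = {1..m}" "distinct s" and e: "e = 0 \<and> odd m \<or> e = \<infinity> \<and> even m"
  shows "alternating True (0 # map enat s @ [e]) \<longleftrightarrow>
    (\<forall>i. i + 1 < m \<longrightarrow> (if even i then s ! i > s ! (i + 1) else s ! i < s ! (i + 1)))"
proof -
  let ?z = "0 # map enat s @ [e]"
  define C where "C i \<longleftrightarrow> (if even i then ?z ! i < ?z ! Suc i else ?z ! Suc i < ?z ! i)" for i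
  have len: "length s = m" using distinct_card[OF s(2)] s(1) by simp
  have pos: "0 < enat (s ! k)" if "k < m" for k
    using nth_mem[of k s] that len s(1) by (auto simp: zero_enat_def)
  have "C 0" using e pos[of 0] len by (cases m) (auto simp: C_def nth_append)
  moreover have "C m" using e pos[of "m - 1"] len by (cases m) (auto simp: C_def nth_append)
  ultimately have "(\<forall>i. Suc i < m + 2 \<longrightarrow> C i) \<longleftrightarrow> (\<forall>i. i + 1 < m \<longrightarrow> C (Suc i))"
  proof (intro iffI allI impI)
    fix i assume "\<forall>i. Suc i < m + 2 \<longrightarrow> C i" and "i + 1 < m"
    then show "C (Suc i)" by simp
  next
    fix i assume "C 0" "C m" "\<forall>i. i + 1 < m \<longrightarrow> C (Suc i)" and "Suc i < m + 2"
    then show "C i" by (cases i) (auto simp: less_Suc_eq)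
  qed
  moreover have "C (Suc i) \<longleftrightarrow> (if even i then s ! i > s ! (i + 1) else s ! i < s ! (i + 1))"
    if "i + 1 < m" for i
    using that len by (auto simp: C_def nth_append)
  ultimately show ?thesis using alternating_iff_nth[of True ?z] len by (simp add: C_def)
qed

lemma wrap_in_hole_words:
  assumes e: "e = 0 \<and> odd m \<or> e = \<infinity> \<and> even m" and s: "s \<in> falling_alt m"
  shows "0 # map enat s @ [e] \<in> hole_words e m (if e = 0 then 0 else 1)"
proof -
  have ds: "distinct s" and ss: "set s = {1..m}"
    and alt: "\<forall>i. i + 1 < m \<longrightarrow> (if even i then s ! i > s ! (i + 1) else s ! i < s ! (i + 1))"
    using s by (auto simp: falling_alt_def)
  have "0 \<notin> set (map enat s)" "\<infinity> \<notin> set (map enat s)" using ss by (auto simp: zero_enat_def)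
  then have "count_list (map enat s) 0 = 0" "count_holes (map enat s) = 0"
    and "proper_letters (0 # map enat s @ [e]) = map enat s"
    using e by (auto simp: count_list_0_iff intro: filter_True)
  then show ?thesis
    using alternating_wrap_iff[OF ss ds e] alt ds ss e
    by (intro hole_wordsI) (auto simp: distinct_map inj_on_def)
qed

lemma hole_words_wrap:
  assumes e: "e = 0 \<and> odd m \<or> e = \<infinity> \<and> even m" and z: "z \<in> hole_words e m (if e = 0 then 0 else 1)"
  obtains s where "s \<in> falling_alt m" "z = 0 # map enat s @ [e]"
proof -
  note zD = hole_wordsD[OF z]
  obtain r where r: "z = 0 # r" using zD(1,2) by (cases z) auto
  moreover have "r \<noteq> []" using zD(3,5) r e by (auto simp: zero_enat_def)
  ultimately obtain w where w: "z = 0 # w @ [e]"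
    using zD(3) by (metis append_butlast_last_id last_ConsR)
  have "0 \<notin> set w" "\<infinity> \<notin> set w"
    using zD(5,8) w e by (auto simp: count_list_0_iff[symmetric] split: if_splits)
  then have pl: "proper_letters z = w" using w e by (auto intro: filter_True)
  define s where "s = map the_enat w"
  have "enat (the_enat a) = a" if "a \<noteq> \<infinity>" for a using that by (cases a) auto
  then have ws: "w = map enat s" unfolding s_def using \<open>\<infinity> \<notin> set w\<close> by (induction w) auto
  have ds: "distinct s" using zD(6) pl ws by (simp add: distinct_map)
  have "enat ` set s = enat ` {1..m}" using zD(7) pl ws by simp
  then have ss: "set s = {1..m}" by (simp add: inj_image_eq_iff inj_on_def)
  have "s \<in> falling_alt m"
    using alternating_wrap_iff[OF ss ds e] zD(4) w ws ds ss by (simp add: falling_alt_def)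
  then show thesis using that w ws by blast
qed

lemma hole_words_eq_wrap:
  assumes e: "e = 0 \<and> odd m \<or> e = \<infinity> \<and> even m"
  shows "hole_words e m (if e = 0 then 0 else 1) = (\<lambda>s. 0 # map enat s @ [e]) ` falling_alt m"
  using hole_words_wrap[OF e] wrap_in_hole_words[OF e] by blast

lemma hole_words_gf_eq_Estar:
  fixes q :: "'a::field"
  assumes e: "e = 0 \<and> odd m \<or> e = \<infinity> \<and> even m"
  shows "hole_words_gf q e m (if e = 0 then 0 else 1) = Estar m q"
proof -
  have "inj_on (\<lambda>s. 0 # map enat s @ [e]) (falling_alt m)"
    by (auto simp: inj_on_def inj_map_eq_map)
  then have "hole_words_gf q e m (if e = 0 then 0 else 1) =
      (\<Sum>s \<in> falling_alt m. q ^ word_stat e (0 # map enat s @ [e]))"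
    unfolding hole_words_gf_def hole_words_eq_wrap[OF e] by (simp add: sum.reindex)
  also have "\<dots> = Estar m q"
    using e by (auto simp: Estar_def word_stat_def occ_wrap_0 occ_wrap_inf)
  finally show ?thesis .
qed

lemma hole_words_gf_0_path_weight:
  "hole_words_gf q 0 v (Suc h) =
    path_weight (\<lambda>i. hole_weight q (Suc i)) (\<lambda>i. hole_weight q (Suc i)) v h"
proof (induction v arbitrary: h)
  case 0 then show ?case by (simp add: hole_words_gf_0)
next
  case (Suc v)
  have "hole_words_gf q 0 (Suc v) (Suc h) =
      hole_weight q (Suc (Suc h)) * hole_words_gf q 0 v (Suc (Suc h)) +
      hole_weight q h * hole_words_gf q 0 v h"
    using hole_words_gf_rec[of 0 q v "Suc h"] by simp
  also have "\<dots> = path_weight (\<lambda>i. hole_weight q (Suc i)) (\<lambda>i. hole_weight q (Suc i)) (Suc v) h"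
    using Suc.IH by (cases h) (simp_all add: algebra_simps)
  finally show ?case .
qed

lemma hole_words_gf_inf_path_weight:
  "hole_words_gf q \<infinity> v (Suc h) = path_weight (\<lambda>i. hole_weight q (Suc i)) (hole_weight q) v h"
proof (induction v arbitrary: h)
  case 0 then show ?case by (simp add: hole_words_gf_0)
next
  case (Suc v)
  have "hole_words_gf q \<infinity> (Suc v) (Suc h) =
      hole_weight q (Suc h) * hole_words_gf q \<infinity> v (Suc (Suc h)) +
      hole_weight q h * hole_words_gf q \<infinity> v h"
    using hole_words_gf_rec[of \<infinity> q v "Suc h"] by simp
  also have "\<dots> = path_weight (\<lambda>i. hole_weight q (Suc i)) (hole_weight q) (Suc v) h"
    using Suc.IH by (cases h) (simp_all add: algebra_simps)
  finally show ?case .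
qed

section \<open>The continued fractions\<close>

lemma odd_Estar_fps:
  "Abs_fps (\<lambda>m. if odd m then Estar m q else 0) =
    fps_X * Abs_fps (\<lambda>n. path_weight (\<lambda>i. hole_weight q (Suc i)) (\<lambda>i. hole_weight q (Suc i)) n 0)"
proof (rule fps_ext)
  fix m
  show "fps_nth (Abs_fps (\<lambda>m. if odd m then Estar m q else 0)) m = fps_nth (fps_X *
      Abs_fps (\<lambda>n. path_weight (\<lambda>i. hole_weight q (Suc i)) (\<lambda>i. hole_weight q (Suc i)) n 0)) m"
  proof (cases m)
    case (Suc n)
    have "Estar (Suc n) q = hole_words_gf q 0 (Suc n) 0" if "even n"
      using hole_words_gf_eq_Estar[of 0 "Suc n" q] that by simp
    also have "\<dots> = hole_words_gf q 0 n 1"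
      using hole_words_gf_rec[of 0 q n 0] by (simp add: hole_weight_def)
    finally show ?thesis
      using Suc hole_words_gf_0_path_weight[of q n 0] path_weight_odd[of n 0]
      by (auto simp: fps_X_mult_nth)
  qed (simp add: fps_X_mult_nth)
qed

lemma even_Estar_fps:
  "Abs_fps (\<lambda>m. if even m then Estar m q else 0) =
    Abs_fps (\<lambda>n. path_weight (\<lambda>i. hole_weight q (Suc i)) (hole_weight q) n 0)"
proof -
  have "Estar m q = hole_words_gf q \<infinity> m 1" if "even m" for m
    using hole_words_gf_eq_Estar[of \<infinity> m q] that by simp
  then show ?thesis
    using hole_words_gf_inf_path_weight[of q _ 0] path_weight_odd[of _ 0] by (intro fps_ext) auto
qed

lemma tendsto_fps_X_mult:
  fixes F :: "'a::ring_1 fps"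
  assumes "f \<longlonglongrightarrow> F"
  shows "(\<lambda>h. fps_X * f h) \<longlonglongrightarrow> fps_X * F"
proof (rule tendsto_fpsI)
  fix n
  show "eventually (\<lambda>h. fps_nth (fps_X * f h) n = fps_nth (fps_X * F) n) sequentially"
  proof (cases n)
    case (Suc k)
    from assms have "eventually (\<lambda>h. fps_nth (f h) k = fps_nth F k) sequentially"
      by (simp add: tendsto_fps_iff)
    then show ?thesis by (rule eventually_mono) (simp add: Suc)
  qed (simp add: fps_X_mult_nth)
qed

theorem corollary2p2:
  fixes q :: "'a::field"
  shows "((\<lambda>h. fps_X * cfrac (\<lambda>k. q ^ (2 * k - 1) * qint k q * qint (k + 1) q) 1 h)
            \<longlonglongrightarrow> Abs_fps (\<lambda>m. if odd m then Estar m q else 0)) \<and>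
         ((\<lambda>h. cfrac (\<lambda>k. q ^ (2 * k - 2) * (qint k q) ^ 2) 1 h)
            \<longlonglongrightarrow> Abs_fps (\<lambda>m. if even m then Estar m q else 0))"
proof
  have "q ^ (2 * Suc k - 1) * qint (Suc k) q * qint (Suc k + 1) q =
      hole_weight q (Suc k) * hole_weight q (Suc (Suc k))" for k
    by (simp add: hole_weight_eq power_add[symmetric] mult_2_right algebra_simps)
  then have "(\<lambda>h. cfrac (\<lambda>k. q ^ (2 * k - 1) * qint k q * qint (k + 1) q) 1 h) \<longlonglongrightarrow>
      Abs_fps (\<lambda>n. path_weight (\<lambda>i. hole_weight q (Suc i)) (\<lambda>i. hole_weight q (Suc i)) n 0)"
    by (intro cfrac_tendsto_path_weight) simp
  then show "(\<lambda>h. fps_X * cfrac (\<lambda>k. q ^ (2 * k - 1) * qint k q * qint (k + 1) q) 1 h)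
      \<longlonglongrightarrow> Abs_fps (\<lambda>m. if odd m then Estar m q else 0)"
    unfolding odd_Estar_fps by (rule tendsto_fps_X_mult)
next
  have "q ^ (2 * Suc k - 2) * qint (Suc k) q ^ 2 = hole_weight q (Suc k) * hole_weight q (Suc k)"
    for k
    by (simp add: hole_weight_eq power_add[symmetric] power2_eq_square mult_2_right algebra_simps)
  then show "(\<lambda>h. cfrac (\<lambda>k. q ^ (2 * k - 2) * (qint k q) ^ 2) 1 h)
      \<longlonglongrightarrow> Abs_fps (\<lambda>m. if even m then Estar m q else 0)"
    unfolding even_Estar_fps by (intro cfrac_tendsto_path_weight) simp
qed

end
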